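(* Let $M\subset\mathbb{C}^2$ be a real-analytic Levi-nonflat hypersurface which is nonminimal at the origin. (i) If $D$ is a tangential sectorial domain for $M$ at the origin, then for any local holomorphic coordinates $(z,w)$ centered at $0$ in which the complex locus of $M$ is $\{w=0\}$ and $M$ contains the curve $\{z=0,\ \mathrm{Im}\,w=0\}$, the set $D$ contains a set of the form $\Delta\times(S^+\cup\{0\}\cup S^-)$ (in these coordinates), with $\Delta,S^\pm$ as below. (ii) If a $C^\infty$ CR-function $f$ on $M$ defined near the origin is sectorially extendable to some tangential sectorial domain $D$ (standard in some admissible coordinates), then it is also sectorially extendable to a tangential sectorial domain $\tilde D$ which is standard with respect to any other choice of admissible coordinates.
   Context: Nonminimal at $0$: $M$ contains a germ of a nontrivial complex curve $X$ through $0$ (its complex locus). Admissible coordinates: local holomorphic coordinates $(z,w)$ centered at $0$ with $X=\{w=0\}$ and $\{z=0,\ \mathrm{Im}\,w=0\}\subset M$. A tangential sectorial domain for $M$ at $0$ is a set which in some admissible coordinates has the standard form $\Delta\times(S^+\cup\{0\}\cup S^-)$, where $\Delta\subset\mathbb{C}$ is a disc of radius $r>0$ centered at $0$, $S^+=\{|w|<R,\,-\alpha<\arg w<\alpha\}$, $S^-=\{|w|<R,\,\pi-\alpha<\arg w<\pi+\alpha\}$, with $R>0$, $0<\alpha<\pi/2$, $\arg w\in(-\pi/2,3\pi/2]$; write $D^\pm=\Delta\times S^\pm$. A holomorphic $g$ on $D^\pm$ admits the asymptotic representation $\sum_{k,l\ge0}a_{kl}z^kw^l$ if for every $N\ge0$,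 $g-\sum_{k+l\le N}a_{kl}z^kw^l=o(|z|^N+|w|^N)$ as $(z,w)\to0$ in $D^\pm$. A $C^\infty$ CR-function $f$ on $M$ near $0$ is sectorially extendable to $D$ if there exist $f^\pm$ holomorphic on $D^\pm$ with $f^\pm=f$ on $D^\pm\cap M$ and with $f^+$, $f^-$ admitting the same asymptotic representation on $D^+$, $D^-$ respectively. *)

theory Defs
  imports "HOL-Analysis.Analysis" "HOL-Complex_Analysis.Complex_Analysis"
begin

text \<open>Points of C^2 are pairs (z,w) :: complex \<times> complex, regarded as R^4.\<close>

definition cmul2 :: "complex \<Rightarrow> complex \<times> complex \<Rightarrow> complex \<times> complex" where
  "cmul2 c v = (c * fst v, c * snd v)"

definition real_analytic_on :: "(complex \<times> complex) set \<Rightarrow> (complex \<times> complex \<Rightarrow> real) \<Rightarrow> bool" where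
  "real_analytic_on U \<rho> \<longleftrightarrow>
     (\<forall>p\<in>U. \<exists>e>0. \<exists>c :: nat \<times> nat \<times> nat \<times> nat \<Rightarrow> real. \<forall>q\<in>ball p e.
        ((\<lambda>(i,j,k,l). c (i,j,k,l) * Re (fst q - fst p) ^ i * Im (fst q - fst p) ^ j
                         * Re (snd q - snd p) ^ k * Im (snd q - snd p) ^ l) has_sum \<rho> q) UNIV)"

definition defining_fn :: "(complex \<times> complex) set \<Rightarrow> (complex \<times> complex) set \<Rightarrow> (complex \<times> complex \<Rightarrow> real) \<Rightarrow> bool" where
  "defining_fn M U \<rho> \<longleftrightarrow> open U \<and> (0,0) \<in> U \<and> real_analytic_on U \<rho> \<and>
     (\<forall>p\<in>U. frechet_derivative \<rho> (at p) \<noteq> (\<lambda>v. 0)) \<and>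
     M \<inter> U = {p \<in> U. \<rho> p = 0}"

definition real_analytic_hypersurface :: "(complex \<times> complex) set \<Rightarrow> bool" where
  "real_analytic_hypersurface M \<longleftrightarrow> (\<exists>U \<rho>. defining_fn M U \<rho>)"

definition D2 :: "(complex \<times> complex \<Rightarrow> real) \<Rightarrow> complex \<times> complex \<Rightarrow> complex \<times> complex \<Rightarrow> complex \<times> complex \<Rightarrow> real" where
  "D2 \<rho> p u v = frechet_derivative (\<lambda>q. frechet_derivative \<rho> (at q) u) (at p) v"

text \<open>Levi form (times 4) of \<rho> at p on vector v: D2(v,v) + D2(iv,iv) = 4 \<partial>\<partial>bar \<rho>(v, vbar);
  complex tangent space H_p = {v. d\<rho>_p v = 0, d\<rho>_p (iv) = 0}.\<close>
definition levi_nonflat :: "(complex \<times> complex) set \<Rightarrow> bool" where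
  "levi_nonflat M \<longleftrightarrow> (\<exists>U \<rho>. defining_fn M U \<rho> \<and>
     (\<forall>W. open W \<and> (0,0) \<in> W \<longrightarrow>
        (\<exists>p \<in> M \<inter> U \<inter> W. \<exists>v. frechet_derivative \<rho> (at p) v = 0 \<and>
             frechet_derivative \<rho> (at p) (cmul2 \<i> v) = 0 \<and>
             D2 \<rho> p v v + D2 \<rho> p (cmul2 \<i> v) (cmul2 \<i> v) \<noteq> 0)))"

definition holo2 :: "(complex \<times> complex) set \<Rightarrow> (complex \<times> complex \<Rightarrow> complex) \<Rightarrow> bool" where
  "holo2 S g \<longleftrightarrow> (\<forall>p\<in>S. \<exists>L. (g has_derivative L) (at p) \<and> (\<forall>c v. L (cmul2 c v) = c * L v))"

definition complex_locus :: "(complex \<times> complex) set \<Rightarrow> (complex \<times> complex) set" where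
  "complex_locus M = {p \<in> M. \<exists>e>0. \<exists>\<gamma> :: complex \<Rightarrow> complex \<times> complex.
      (fst \<circ> \<gamma>) holomorphic_on ball 0 e \<and> (snd \<circ> \<gamma>) holomorphic_on ball 0 e \<and>
      \<gamma> 0 = p \<and> (\<exists>t\<in>ball 0 e. \<gamma> t \<noteq> p) \<and> \<gamma> ` ball 0 e \<subseteq> M}"

definition nonminimal_at0 :: "(complex \<times> complex) set \<Rightarrow> bool" where
  "nonminimal_at0 M \<longleftrightarrow> (0,0) \<in> complex_locus M"

definition coord_chart :: "(complex \<times> complex) set \<Rightarrow> (complex \<times> complex \<Rightarrow> complex \<times> complex) \<Rightarrow> bool" where
  "coord_chart U \<Phi> \<longleftrightarrow> open U \<and> (0,0) \<in> U \<and> \<Phi> (0,0) = (0,0) \<and>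
     holo2 U (fst \<circ> \<Phi>) \<and> holo2 U (snd \<circ> \<Phi>) \<and> inj_on \<Phi> U \<and> open (\<Phi> ` U) \<and>
     holo2 (\<Phi> ` U) (fst \<circ> inv_into U \<Phi>) \<and> holo2 (\<Phi> ` U) (snd \<circ> inv_into U \<Phi>)"

definition admissible :: "(complex \<times> complex) set \<Rightarrow> (complex \<times> complex) set \<Rightarrow> (complex \<times> complex \<Rightarrow> complex \<times> complex) \<Rightarrow> bool" where
  "admissible M U \<Phi> \<longleftrightarrow> coord_chart U \<Phi> \<and>
     (\<exists>W. open W \<and> (0,0) \<in> W \<and> W \<subseteq> U \<and>
        (\<forall>p\<in>W. p \<in> complex_locus M \<longleftrightarrow> snd (\<Phi> p) = 0) \<and>
        (\<forall>p\<in>W. fst (\<Phi> p) = 0 \<and> Im (snd (\<Phi> p)) = 0 \<longrightarrow> p \<in> M))"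

text \<open>Sectors. With arg w in (-pi/2, 3pi/2]: -\<alpha> < arg w < \<alpha> iff |Arg w| < \<alpha>;
  pi-\<alpha> < arg w < pi+\<alpha> iff |Arg (-w)| < \<alpha> (w \<noteq> 0).\<close>
definition Splus :: "real \<Rightarrow> real \<Rightarrow> complex set" where
  "Splus R \<alpha> = {w. w \<noteq> 0 \<and> norm w < R \<and> \<bar>Arg w\<bar> < \<alpha>}"

definition Sminus :: "real \<Rightarrow> real \<Rightarrow> complex set" where
  "Sminus R \<alpha> = {w. w \<noteq> 0 \<and> norm w < R \<and> \<bar>Arg (- w)\<bar> < \<alpha>}"

definition Dplus :: "real \<Rightarrow> real \<Rightarrow> real \<Rightarrow> (complex \<times> complex) set" where
  "Dplus r R \<alpha> = ball 0 r \<times> Splus R \<alpha>"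

definition Dminus :: "real \<Rightarrow> real \<Rightarrow> real \<Rightarrow> (complex \<times> complex) set" where
  "Dminus r R \<alpha> = ball 0 r \<times> Sminus R \<alpha>"

definition std_sect :: "real \<Rightarrow> real \<Rightarrow> real \<Rightarrow> (complex \<times> complex) set" where
  "std_sect r R \<alpha> = ball 0 r \<times> (Splus R \<alpha> \<union> {0} \<union> Sminus R \<alpha>)"

definition valid_params :: "real \<Rightarrow> real \<Rightarrow> real \<Rightarrow> bool" where
  "valid_params r R \<alpha> \<longleftrightarrow> r > 0 \<and> R > 0 \<and> 0 < \<alpha> \<and> \<alpha> < pi / 2"

definition std_in :: "(complex \<times> complex) set \<Rightarrow> (complex \<times> complex) set \<Rightarrow> (complex \<times> complex \<Rightarrow> complex \<times> complex)
    \<Rightarrow> real \<Rightarrow> real \<Rightarrow> real \<Rightarrow> (complex \<times> complex) set \<Rightarrow> bool" where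
  "std_in M U \<Phi> r R \<alpha> D \<longleftrightarrow> admissible M U \<Phi> \<and> valid_params r R \<alpha> \<and>
     std_sect r R \<alpha> \<subseteq> \<Phi> ` U \<and> D = {p \<in> U. \<Phi> p \<in> std_sect r R \<alpha>}"

definition tangential_sectorial :: "(complex \<times> complex) set \<Rightarrow> (complex \<times> complex) set \<Rightarrow> bool" where
  "tangential_sectorial M D \<longleftrightarrow> (\<exists>U \<Phi> r R \<alpha>. std_in M U \<Phi> r R \<alpha> D)"

definition asymp_rep :: "(complex \<times> complex \<Rightarrow> complex) \<Rightarrow> (nat \<Rightarrow> nat \<Rightarrow> complex) \<Rightarrow> (complex \<times> complex) set \<Rightarrow> bool" where
  "asymp_rep g a S \<longleftrightarrow> (\<forall>N::nat. \<forall>\<epsilon>>0. eventually (\<lambda>q.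
      norm (g q - (\<Sum>k\<le>N. \<Sum>l\<le>N - k. a k l * fst q ^ k * snd q ^ l))
        \<le> \<epsilon> * (norm (fst q) ^ N + norm (snd q) ^ N)) (at (0,0) within S))"

fun Ck_on :: "nat \<Rightarrow> ('a::real_normed_vector \<Rightarrow> 'b::real_normed_vector) \<Rightarrow> 'a set \<Rightarrow> bool" where
  "Ck_on 0 f S = continuous_on S f"
| "Ck_on (Suc k) f S = (\<exists>f'. (\<forall>p\<in>S. (f has_derivative f' p) (at p)) \<and> (\<forall>v. Ck_on k (\<lambda>p. f' p v) S))"

definition smooth_on :: "('a::real_normed_vector \<Rightarrow> 'b::real_normed_vector) \<Rightarrow> 'a set \<Rightarrow> bool" where
  "smooth_on f S \<longleftrightarrow> (\<forall>k. Ck_on k f S)"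

definition CR_smooth :: "(complex \<times> complex) set \<Rightarrow> (complex \<times> complex) set \<Rightarrow> (complex \<times> complex \<Rightarrow> complex) \<Rightarrow> bool" where
  "CR_smooth M V f \<longleftrightarrow> open V \<and> (0,0) \<in> V \<and> (\<exists>U \<rho> F. defining_fn M U \<rho> \<and> V \<subseteq> U \<and>
     smooth_on F V \<and> (\<forall>p \<in> M \<inter> V. F p = f p) \<and>
     (\<forall>p \<in> M \<inter> V. \<forall>v. frechet_derivative \<rho> (at p) v = 0 \<and> frechet_derivative \<rho> (at p) (cmul2 \<i> v) = 0
        \<longrightarrow> frechet_derivative F (at p) (cmul2 \<i> v) = \<i> * frechet_derivative F (at p) v))"

text \<open>f is sectorially extendable to the standard domain with parameters r,R,\<alpha> in the
  coordinates (U,\<Phi>); g+- are the extensions f+- written in these coordinates.\<close>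
definition sect_ext :: "(complex \<times> complex \<Rightarrow> complex) \<Rightarrow> (complex \<times> complex) set \<Rightarrow> (complex \<times> complex) set
    \<Rightarrow> (complex \<times> complex \<Rightarrow> complex \<times> complex) \<Rightarrow> real \<Rightarrow> real \<Rightarrow> real \<Rightarrow> bool" where
  "sect_ext f M U \<Phi> r R \<alpha> \<longleftrightarrow> (\<exists>gp gm a.
     holo2 (Dplus r R \<alpha>) gp \<and> holo2 (Dminus r R \<alpha>) gm \<and>
     (\<forall>p \<in> U \<inter> M. \<Phi> p \<in> Dplus r R \<alpha> \<longrightarrow> gp (\<Phi> p) = f p) \<and>
     (\<forall>p \<in> U \<inter> M. \<Phi> p \<in> Dminus r R \<alpha> \<longrightarrow> gm (\<Phi> p) = f p) \<and>
     asymp_rep gp a (Dplus r R \<alpha>) \<and> asymp_rep gm a (Dminus r R \<alpha>))"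

end

theory Submission
  imports Defs
begin

text \<open>
  Let H = \<Phi>0 \<circ> inv \<Phi> be the transition map between two admissible coordinate systems.
  Both systems straighten the complex locus to w = 0, so H preserves this line and the
  w-derivative of its second component at the origin is a number c. The real line
  z = 0, w \<in> R lies in M in both systems and the tangent space of M at 0 is C \<times> R, hence c is
  real; it is nonzero because H is invertible. Schwarz's lemma makes h2(z,w) = c w (1 + o(1))
  uniform in z, so a thinner standard sector in the new coordinates is mapped into a given
  standard sector in the old ones, the two halves being exchanged when c < 0. This gives (i).
  For (ii) the extensions f+ and f- are pulled back by H; their asymptotic expansions survive because
  a polynomial composed with a holomorphic map vanishing at 0 has a Taylor expansion there,
  obtained from Cauchy's formula on a bidisc.
\<close>

section \<open>Holomorphic functions of two variables\<close>

lemma holo2E: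
  assumes "holo2 S g" "p \<in> S"
  obtains L where "(g has_derivative L) (at p)" "\<And>c v. L (cmul2 c v) = c * L v"
  using assms unfolding holo2_def by blast

lemma complex_linear_Pair_expansion:
  assumes "linear L" "\<And>c v. L (cmul2 c v) = c * L v"
  shows "L v = fst v * L (1,0) + snd v * L (0,1)"
proof -
  have "v = cmul2 (fst v) (1,0) + cmul2 (snd v) (0,1)" by (simp add: cmul2_def)
  then have "L v = L (cmul2 (fst v) (1,0)) + L (cmul2 (snd v) (0,1))"
    by (metis assms(1) linear_add)
  then show ?thesis using assms(2) by simp
qed

lemma holo2_const: "holo2 S (\<lambda>_. c)"
  unfolding holo2_def by (auto intro!: exI[of _ "\<lambda>_. 0"] has_derivative_const)

lemma holo2_add:
  assumes "holo2 S f" "holo2 S g"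
  shows "holo2 S (\<lambda>q. f q + g q)"
  unfolding holo2_def
proof
  fix p assume "p \<in> S"
  then obtain L1 L2 where "(f has_derivative L1) (at p)" "\<And>c v. L1 (cmul2 c v) = c * L1 v"
    and "(g has_derivative L2) (at p)" "\<And>c v. L2 (cmul2 c v) = c * L2 v"
    using assms by (metis holo2E)
  then show "\<exists>L. ((\<lambda>q. f q + g q) has_derivative L) (at p) \<and> (\<forall>c v. L (cmul2 c v) = c * L v)"
    by (intro exI[of _ "\<lambda>v. L1 v + L2 v"]) (auto intro: has_derivative_add simp: distrib_left)
qed

lemma holo2_mult:
  assumes "holo2 S f" "holo2 S g"
  shows "holo2 S (\<lambda>q. f q * g q)"
  unfolding holo2_def
proof
  fix p assume "p \<in> S"
  then obtain L1 L2 where L1: "(f has_derivative L1) (at p)" "\<And>c v. L1 (cmul2 c v) = c * L1 v"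
    and L2: "(g has_derivative L2) (at p)" "\<And>c v. L2 (cmul2 c v) = c * L2 v"
    using assms by (metis holo2E)
  have "((\<lambda>q. f q * g q) has_derivative (\<lambda>v. f p * L2 v + L1 v * g p)) (at p)"
    using L1(1) L2(1) by (rule has_derivative_mult)
  moreover have "\<forall>c v. f p * L2 (cmul2 c v) + L1 (cmul2 c v) * g p = c * (f p * L2 v + L1 v * g p)"
    using L1(2) L2(2) by (simp add: algebra_simps)
  ultimately show "\<exists>L. ((\<lambda>q. f q * g q) has_derivative L) (at p) \<and> (\<forall>c v. L (cmul2 c v) = c * L v)"
    by blast
qed

lemma holo2_sum:
  "finite I \<Longrightarrow> (\<And>i. i \<in> I \<Longrightarrow> holo2 S (f i)) \<Longrightarrow> holo2 S (\<lambda>q. \<Sum>i\<in>I. f i q)"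
  by (induction I rule: finite_induct) (auto intro: holo2_add holo2_const)

lemma holo2_power: "holo2 S f \<Longrightarrow> holo2 S (\<lambda>q. f q ^ n)"
  by (induction n) (auto intro: holo2_mult holo2_const)

lemma holo2_subset: "holo2 S f \<Longrightarrow> T \<subseteq> S \<Longrightarrow> holo2 T f"
  unfolding holo2_def by blast

lemma holo2_Pair_has_derivative:
  assumes "holo2 S (\<lambda>q. fst (f q))" "holo2 S (\<lambda>q. snd (f q))" "p \<in> S"
  obtains L where "(f has_derivative L) (at p)" "\<And>c v. L (cmul2 c v) = cmul2 c (L v)"
proof -
  obtain L1 where L1: "((\<lambda>q. fst (f q)) has_derivative L1) (at p)" "\<And>c v. L1 (cmul2 c v) = c * L1 v"
    using holo2E[OF assms(1,3)] by blast
  obtain L2 where L2: "((\<lambda>q. snd (f q)) has_derivative L2) (at p)" "\<And>c v. L2 (cmul2 c v) = c * L2 v"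
    using holo2E[OF assms(2,3)] by blast
  have "((\<lambda>q. (fst (f q), snd (f q))) has_derivative (\<lambda>v. (L1 v, L2 v))) (at p)"
    by (rule has_derivative_Pair[OF L1(1) L2(1)])
  then show thesis
    using L1(2) L2(2) by (intro that[of "\<lambda>v. (L1 v, L2 v)"]) (auto simp: cmul2_def)
qed

lemma holo2_compose:
  assumes "holo2 S g" "holo2 T h1" "holo2 T h2" "\<And>q. q \<in> T \<Longrightarrow> (h1 q, h2 q) \<in> S"
  shows "holo2 T (\<lambda>q. g (h1 q, h2 q))"
  unfolding holo2_def
proof
  fix p assume p: "p \<in> T"
  have "holo2 T (\<lambda>q. fst (h1 q, h2 q))" "holo2 T (\<lambda>q. snd (h1 q, h2 q))"
    using assms(2,3) by simp_all
  then obtain L where L: "((\<lambda>q. (h1 q, h2 q)) has_derivative L) (at p)" "\<And>c v. L (cmul2 c v) = cmul2 c (L v)"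
    by (rule holo2_Pair_has_derivative[OF _ _ p]) auto
  obtain Lg where Lg: "(g has_derivative Lg) (at (h1 p, h2 p))" "\<And>c v. Lg (cmul2 c v) = c * Lg v"
    using holo2E[OF assms(1) assms(4)[OF p]] by blast
  have "((g \<circ> (\<lambda>q. (h1 q, h2 q))) has_derivative (Lg \<circ> L)) (at p)"
    by (rule diff_chain_at[OF L(1)]) (use Lg in simp)
  then show "\<exists>L. ((\<lambda>q. g (h1 q, h2 q)) has_derivative L) (at p) \<and> (\<forall>c v. L (cmul2 c v) = c * L v)"
    using L(2) Lg(2) by (intro exI[of _ "Lg \<circ> L"]) (simp add: o_def)
qed

lemma holo2_isCont: "holo2 S f \<Longrightarrow> p \<in> S \<Longrightarrow> isCont f p"
  by (metis holo2E has_derivative_continuous)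

lemma holo2_imp_continuous_on: "holo2 S f \<Longrightarrow> continuous_on S f"
  by (simp add: continuous_at_imp_continuous_on holo2_isCont)

lemma holo2_holomorphic_on_line:
  assumes "holo2 S F" "\<And>t. t \<in> A \<Longrightarrow> p + cmul2 t v \<in> S"
  shows "(\<lambda>t. F (p + cmul2 t v)) holomorphic_on A"
  unfolding holomorphic_on_def field_differentiable_def
proof (intro ballI)
  fix t assume t: "t \<in> A"
  obtain L where L: "(F has_derivative L) (at (p + cmul2 t v))" "\<And>c v. L (cmul2 c v) = c * L v"
    using holo2E[OF assms(1) assms(2)[OF t]] by blast
  have "((\<lambda>t. p + cmul2 t v) has_derivative (\<lambda>h. cmul2 h v)) (at t)"
    unfolding cmul2_def by (auto intro!: derivative_eq_intros)
  then have "((F \<circ> (\<lambda>t. p + cmul2 t v)) has_derivative (L \<circ> (\<lambda>h. cmul2 h v))) (at t)"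
    by (rule diff_chain_at) (use L in simp)
  moreover have "L \<circ> (\<lambda>h. cmul2 h v) = (\<lambda>h. L v * h)"
    by (simp add: fun_eq_iff L(2) mult.commute)
  ultimately show "\<exists>D. ((\<lambda>t. F (p + cmul2 t v)) has_field_derivative D) (at t within A)"
    unfolding has_field_derivative_def o_def by (metis has_derivative_at_withinI)
qed

lemma holo2_holomorphic_on_fst_slice:
  assumes "holo2 S F" "\<And>z. z \<in> A \<Longrightarrow> (z,w) \<in> S"
  shows "(\<lambda>z. F (z,w)) holomorphic_on A"
  using holo2_holomorphic_on_line[OF assms(1), of A "(0,w)" "(1,0)"] assms(2)
  by (simp add: cmul2_def)

lemma holo2_holomorphic_on_snd_slice:
  assumes "holo2 S F" "\<And>w. w \<in> A \<Longrightarrow> (z,w) \<in> S"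
  shows "(\<lambda>w. F (z,w)) holomorphic_on A"
  using holo2_holomorphic_on_line[OF assms(1), of A "(z,0)" "(0,1)"] assms(2)
  by (simp add: cmul2_def)

section \<open>Taylor expansion on a bidisc\<close>

definition poly2 :: "nat \<Rightarrow> (nat \<Rightarrow> nat \<Rightarrow> complex) \<Rightarrow> complex \<times> complex \<Rightarrow> complex" where
  "poly2 N a q = (\<Sum>k\<le>N. \<Sum>l\<le>N - k. a k l * fst q ^ k * snd q ^ l)"

definition deg_le :: "nat \<Rightarrow> (nat \<times> nat) set" where
  "deg_le N = {(k,l). k + l \<le> N}"

lemma deg_le_Sigma: "deg_le N = Sigma {..N} (\<lambda>k. {..N-k})"
  unfolding deg_le_def by auto

lemma finite_deg_le [simp]: "finite (deg_le N)"
  unfolding deg_le_Sigma by auto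

lemma deg_le_mono: "j \<le> N \<Longrightarrow> deg_le j \<subseteq> deg_le N"
  unfolding deg_le_def by auto

lemma deg_le_subset_square: "deg_le N \<subseteq> {..N} \<times> {..N}"
  unfolding deg_le_def by auto

lemma poly2_eq_sum_deg_le: "poly2 N a q = (\<Sum>(k,l)\<in>deg_le N. a k l * fst q ^ k * snd q ^ l)"
  unfolding poly2_def deg_le_Sigma by (subst sum.Sigma) auto

lemma norm_fst_le_norm: "norm (fst (q::'a::real_normed_vector \<times> 'b::real_normed_vector)) \<le> norm q"
  by (cases q) (simp add: norm_Pair real_le_rsqrt)

lemma norm_snd_le_norm: "norm (snd (q::'a::real_normed_vector \<times> 'b::real_normed_vector)) \<le> norm q"
  by (cases q) (simp add: norm_Pair real_le_rsqrt)

lemma geometric_sum_remainder: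
  fixes u :: complex
  assumes "u \<noteq> 1"
  shows "1 / (1 - u) = (\<Sum>k\<le>N. u ^ k) + u ^ Suc N / (1 - u)"
proof -
  have "1 - u ^ Suc N = (1 - u) * (\<Sum>k<Suc N. u ^ k)" by (rule one_diff_power_eq)
  then have "(\<Sum>k\<le>N. u ^ k) = (1 - u ^ Suc N) / (1 - u)"
    using assms by (simp add: lessThan_Suc_atMost)
  then show ?thesis using assms by (simp add: field_simps)
qed

lemma norm_geometric_sum_le: "norm (u::complex) \<le> 1 \<Longrightarrow> norm (\<Sum>k\<le>N. u ^ k) \<le> real (Suc N)"
proof -
  assume u: "norm u \<le> 1"
  have "norm (\<Sum>k\<le>N. u ^ k) \<le> (\<Sum>k\<le>N. norm (u ^ k))" by (rule norm_sum)
  also have "\<dots> \<le> (\<Sum>k\<le>N. 1)"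
    by (rule sum_mono) (simp add: norm_power power_le_one u)
  finally show ?thesis by simp
qed

lemma norm_geometric_remainder_le:
  fixes u :: complex
  assumes "norm u \<le> s" "s \<le> 1/2"
  shows "norm (u ^ Suc N / (1 - u)) \<le> 2 * s ^ Suc N"
proof -
  have s0: "0 \<le> s" using assms(1) norm_ge_zero order_trans by blast
  have "1 - norm u \<le> norm (1 - u)" by (metis norm_one norm_triangle_ineq2)
  then have d: "1/2 \<le> norm (1 - u)" using assms by linarith
  have "norm (u ^ Suc N / (1 - u)) = norm u ^ Suc N / norm (1 - u)"
    by (simp add: norm_divide norm_power norm_mult)
  also have "\<dots> \<le> s ^ Suc N / (1/2)"
    by (rule frac_le) (use assms s0 d power_mono[OF assms(1) norm_ge_zero, of "Suc N"] in \<open>auto simp del: power_Suc\<close>)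
  finally show ?thesis by simp
qed

lemma norm_sum_square_minus_deg_le:
  fixes u v :: complex
  assumes u: "norm u \<le> s" and v: "norm v \<le> s" and s: "s \<le> 1"
  shows "norm (\<Sum>(k,l)\<in>{..N}\<times>{..N} - deg_le N. u ^ k * v ^ l) \<le> real (Suc N) ^ 2 * s ^ Suc N"
proof -
  have s0: "0 \<le> s" using u norm_ge_zero order_trans by blast
  have "norm (\<Sum>(k,l)\<in>{..N}\<times>{..N} - deg_le N. u ^ k * v ^ l) \<le> (\<Sum>(k,l)\<in>{..N}\<times>{..N} - deg_le N. s ^ Suc N)"
  proof (rule order_trans[OF norm_sum sum_mono])
    fix kl assume kl: "kl \<in> {..N}\<times>{..N} - deg_le N"
    obtain k l where kl': "kl = (k,l)" by force
    have "N < k + l" using kl unfolding kl' deg_le_def by auto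
    have "norm (u ^ k * v ^ l) \<le> s ^ k * s ^ l"
      by (simp add: norm_mult norm_power mult_mono power_mono u v s0)
    also have "\<dots> = s ^ (k + l)" by (simp add: power_add)
    also have "\<dots> \<le> s ^ Suc N" by (rule power_decreasing) (use \<open>N < k + l\<close> s0 s in auto)
    finally show "norm (case kl of (k, l) \<Rightarrow> u ^ k * v ^ l) \<le> (case kl of (k, l) \<Rightarrow> s ^ Suc N)"
      by (simp add: kl')
  qed
  also have "\<dots> \<le> real (Suc N) ^ 2 * s ^ Suc N"
  proof -
    have "card ({..N}\<times>{..N} - deg_le N) \<le> card ({..N}\<times>{..N::nat})" by (rule card_mono) auto
    then have "real (card ({..N}\<times>{..N} - deg_le N)) \<le> real (Suc N * Suc N)"
      by (simp only: of_nat_le_iff card_cartesian_product card_atMost)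
    then have "real (card ({..N}\<times>{..N} - deg_le N)) \<le> real (Suc N) ^ 2"
      by (simp only: of_nat_mult power2_eq_square)
    then show ?thesis by (simp add: mult_right_mono s0)
  qed
  finally show ?thesis .
qed

lemma norm_double_geometric_remainder_le:
  fixes u v :: complex
  assumes u: "norm u \<le> s" and v: "norm v \<le> s" and s: "s \<le> 1/2"
  shows "norm (1 / ((1 - u) * (1 - v)) - (\<Sum>(k,l)\<in>deg_le N. u ^ k * v ^ l))
          \<le> (real (Suc N) ^ 2 + 4 * real (Suc N) + 4) * s ^ Suc N"
proof -
  have s0: "0 \<le> s" using u norm_ge_zero order_trans by blast
  have s1: "s \<le> 1" using s by simp
  have u1: "u \<noteq> 1" using u s by auto
  have v1: "v \<noteq> 1" using v s by auto
  define A where "A = (\<Sum>k\<le>N. u ^ k)"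
  define B where "B = (\<Sum>k\<le>N. v ^ k)"
  define a where "a = u ^ Suc N / (1 - u)"
  define b where "b = v ^ Suc N / (1 - v)"
  define E where "E = (\<Sum>(k,l)\<in>{..N}\<times>{..N} - deg_le N. u ^ k * v ^ l)"
  have "1 / ((1 - u) * (1 - v)) = (A + a) * (B + b)"
    using geometric_sum_remainder[OF u1, of N] geometric_sum_remainder[OF v1, of N]
    unfolding A_def B_def a_def b_def by (metis divide_divide_eq_left' times_divide_times_eq mult_1)
  moreover have "A * B = (\<Sum>(k,l)\<in>deg_le N. u ^ k * v ^ l) + E"
    unfolding A_def B_def E_def sum_product sum.cartesian_product
    by (subst sum.subset_diff[OF deg_le_subset_square]) auto
  ultimately have "1 / ((1 - u) * (1 - v)) - (\<Sum>(k,l)\<in>deg_le N. u ^ k * v ^ l) = E + A * b + a * B + a * b"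
    by (simp add: algebra_simps)
  also have "norm \<dots> \<le> real (Suc N) ^ 2 * s ^ Suc N + real (Suc N) * (2 * s ^ Suc N)
                + 2 * s ^ Suc N * real (Suc N) + 2 * s ^ Suc N * (2 * s ^ Suc N)"
  proof -
    have nE: "norm E \<le> real (Suc N) ^ 2 * s ^ Suc N"
      unfolding E_def by (rule norm_sum_square_minus_deg_le[OF u v s1])
    have nA: "norm A \<le> real (Suc N)" unfolding A_def using u s1 by (intro norm_geometric_sum_le) simp
    have nB: "norm B \<le> real (Suc N)" unfolding B_def using v s1 by (intro norm_geometric_sum_le) simp
    have na: "norm a \<le> 2 * s ^ Suc N" unfolding a_def by (rule norm_geometric_remainder_le[OF u s])
    have nb: "norm b \<le> 2 * s ^ Suc N" unfolding b_def by (rule norm_geometric_remainder_le[OF v s])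
    have "norm (A * b) \<le> real (Suc N) * (2 * s ^ Suc N)"
      unfolding norm_mult by (rule mult_mono) (use nA nb in auto)
    moreover have "norm (a * B) \<le> 2 * s ^ Suc N * real (Suc N)"
      unfolding norm_mult by (rule mult_mono) (use na nB s0 in auto)
    moreover have "norm (a * b) \<le> 2 * s ^ Suc N * (2 * s ^ Suc N)"
      unfolding norm_mult by (rule mult_mono) (use na nb s0 in auto)
    ultimately show ?thesis using nE norm_triangle_ineq[of "_ + _ + _" "a*b"]
      norm_triangle_ineq[of "_ + _" "a*B"] norm_triangle_ineq[of "_" "A*b"]
      by (smt (verit, best))
  qed
  also have "\<dots> \<le> (real (Suc N) ^ 2 + 4 * real (Suc N) + 4) * s ^ Suc N"
  proof -
    have "s ^ Suc N * s ^ Suc N \<le> s ^ Suc N * 1"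
      by (rule mult_left_mono[OF power_le_one[OF s0 s1]]) (use s0 in simp)
    then show ?thesis by (simp add: algebra_simps del: power_Suc)
  qed
  finally show ?thesis .
qed

definition torus_integral :: "real \<Rightarrow> (complex \<times> complex \<Rightarrow> complex) \<Rightarrow> complex" where
  "torus_integral r \<phi> = contour_integral (circlepath 0 r) (\<lambda>\<zeta>. contour_integral (circlepath 0 r) (\<lambda>\<eta>. \<phi> (\<zeta>,\<eta>)))"

lemma torus_inner_integrable:
  fixes \<phi> :: "complex \<times> complex \<Rightarrow> complex"
  assumes "0 < r" "continuous_on (sphere 0 r \<times> sphere 0 r) \<phi>" "\<zeta> \<in> sphere 0 r"
  shows "(\<lambda>\<eta>. \<phi> (\<zeta>,\<eta>)) contour_integrable_on circlepath 0 r"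
proof (rule contour_integrable_continuous_circlepath)
  show "continuous_on (path_image (circlepath 0 r)) (\<lambda>\<eta>. \<phi> (\<zeta>, \<eta>))"
    using assms by (auto intro!: continuous_on_compose2[OF assms(2)] continuous_intros)
qed

lemma continuous_on_torus_inner_integral:
  fixes \<phi> :: "complex \<times> complex \<Rightarrow> complex"
  assumes r: "0 < r" and cont: "continuous_on (sphere 0 r \<times> sphere 0 r) \<phi>"
  shows "continuous_on (sphere 0 r) (\<lambda>\<zeta>. contour_integral (circlepath 0 r) (\<lambda>\<eta>. \<phi> (\<zeta>,\<eta>)))"
  unfolding continuous_on_iff
proof (intro ballI allI impI)
  fix \<zeta>0 e assume z0: "\<zeta>0 \<in> sphere (0::complex) r" and e: "(0::real) < e"
  have "uniformly_continuous_on (sphere 0 r \<times> sphere 0 r) \<phi>"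
    by (intro compact_uniformly_continuous cont compact_Times compact_sphere)
  then obtain d where d: "d > 0" and dd: "\<And>x x'. x \<in> sphere 0 r \<times> sphere 0 r \<Longrightarrow> x' \<in> sphere 0 r \<times> sphere 0 r
      \<Longrightarrow> dist x' x < d \<Longrightarrow> dist (\<phi> x') (\<phi> x) < e / (2 * pi * r + 1)"
    unfolding uniformly_continuous_on_def
    by (metis divide_pos_pos e add_pos_pos less_numeral_extra(1) mult_pos_pos pi_gt_zero r zero_less_numeral)
  show "\<exists>d>0. \<forall>x'\<in>sphere 0 r. dist x' \<zeta>0 < d \<longrightarrow>
          dist (contour_integral (circlepath 0 r) (\<lambda>\<eta>. \<phi> (x', \<eta>))) (contour_integral (circlepath 0 r) (\<lambda>\<eta>. \<phi> (\<zeta>0, \<eta>))) < e"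
  proof (intro exI[of _ d] conjI ballI impI d)
    fix \<zeta> assume z: "\<zeta> \<in> sphere 0 r" and dz: "dist \<zeta> \<zeta>0 < d"
    have i1: "(\<lambda>\<eta>. \<phi> (\<zeta>,\<eta>)) contour_integrable_on circlepath 0 r" by (rule torus_inner_integrable[OF r cont z])
    have i2: "(\<lambda>\<eta>. \<phi> (\<zeta>0,\<eta>)) contour_integrable_on circlepath 0 r" by (rule torus_inner_integrable[OF r cont z0])
    have "contour_integral (circlepath 0 r) (\<lambda>\<eta>. \<phi> (\<zeta>, \<eta>)) - contour_integral (circlepath 0 r) (\<lambda>\<eta>. \<phi> (\<zeta>0, \<eta>))
          = contour_integral (circlepath 0 r) (\<lambda>\<eta>. \<phi> (\<zeta>, \<eta>) - \<phi> (\<zeta>0, \<eta>))"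
      by (rule contour_integral_diff[OF i1 i2, symmetric])
    also have "norm \<dots> \<le> e / (2 * pi * r + 1) * (2 * pi * r)"
    proof (rule has_contour_integral_bound_circlepath)
      show "((\<lambda>\<eta>. \<phi> (\<zeta>, \<eta>) - \<phi> (\<zeta>0, \<eta>)) has_contour_integral
             contour_integral (circlepath 0 r) (\<lambda>\<eta>. \<phi> (\<zeta>, \<eta>) - \<phi> (\<zeta>0, \<eta>))) (circlepath 0 r)"
        by (rule has_contour_integral_integral) (use i1 i2 in \<open>rule contour_integrable_diff\<close>)
      have "0 < 2 * pi * r" using r by simp
      then have "0 < 2 * pi * r + 1" by linarith
      then show "0 \<le> e / (2 * pi * r + 1)" using e by simp
      fix \<eta> :: complex assume "norm (\<eta> - 0) = r"
      then have eta: "\<eta> \<in> sphere 0 r" by simp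
      have "dist (\<zeta>, \<eta>) (\<zeta>0, \<eta>) < d" using dz by (simp add: dist_Pair_Pair)
      then have "dist (\<phi> (\<zeta>, \<eta>)) (\<phi> (\<zeta>0, \<eta>)) < e / (2 * pi * r + 1)"
        using dd[of "(\<zeta>0,\<eta>)" "(\<zeta>,\<eta>)"] z z0 eta by auto
      then show "norm (\<phi> (\<zeta>, \<eta>) - \<phi> (\<zeta>0, \<eta>)) \<le> e / (2 * pi * r + 1)" by (simp add: dist_norm)
    qed (use r in auto)
    also have "\<dots> < e"
    proof -
      have p0: "0 < 2 * pi * r" using r by simp
      then have "(2 * pi * r) / (2 * pi * r + 1) < 1" by (simp add: divide_less_eq)
      then have "e * ((2 * pi * r) / (2 * pi * r + 1)) < e * 1" using e by (intro mult_strict_left_mono) auto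
      then show ?thesis by simp
    qed
    finally show "dist (contour_integral (circlepath 0 r) (\<lambda>\<eta>. \<phi> (\<zeta>, \<eta>))) (contour_integral (circlepath 0 r) (\<lambda>\<eta>. \<phi> (\<zeta>0, \<eta>))) < e"
      by (simp add: dist_norm)
  qed
qed

lemma torus_outer_integrable:
  assumes "0 < r" "continuous_on (sphere 0 r \<times> sphere 0 r) \<phi>"
  shows "(\<lambda>\<zeta>. contour_integral (circlepath 0 r) (\<lambda>\<eta>. \<phi> (\<zeta>,\<eta>))) contour_integrable_on circlepath 0 r"
  by (rule contour_integrable_continuous_circlepath) (use continuous_on_torus_inner_integral[OF assms] assms(1) in simp)

lemma torus_integral_sum:
  assumes r: "0 < r" and fin: "finite I" and cont: "\<And>i. i \<in> I \<Longrightarrow> continuous_on (sphere 0 r \<times> sphere 0 r) (\<phi> i)"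
  shows "torus_integral r (\<lambda>p. \<Sum>i\<in>I. \<phi> i p) = (\<Sum>i\<in>I. torus_integral r (\<phi> i))"
proof -
  have "torus_integral r (\<lambda>p. \<Sum>i\<in>I. \<phi> i p) = contour_integral (circlepath 0 r)
          (\<lambda>\<zeta>. \<Sum>i\<in>I. contour_integral (circlepath 0 r) (\<lambda>\<eta>. \<phi> i (\<zeta>,\<eta>)))"
    unfolding torus_integral_def
  proof (rule contour_integral_eq)
    fix \<zeta> assume "\<zeta> \<in> path_image (circlepath 0 r)"
    then have z: "\<zeta> \<in> sphere 0 r" using r by simp
    show "contour_integral (circlepath 0 r) (\<lambda>\<eta>. \<Sum>i\<in>I. \<phi> i (\<zeta>, \<eta>)) =
          (\<Sum>i\<in>I. contour_integral (circlepath 0 r) (\<lambda>\<eta>. \<phi> i (\<zeta>, \<eta>)))"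
      by (rule contour_integral_sum[OF fin]) (use torus_inner_integrable[OF r cont z] in auto)
  qed
  also have "\<dots> = (\<Sum>i\<in>I. torus_integral r (\<phi> i))"
    unfolding torus_integral_def
    by (rule contour_integral_sum[OF fin]) (use torus_outer_integrable[OF r cont] in auto)
  finally show ?thesis .
qed

lemma torus_integral_add:
  assumes r: "0 < r" and c1: "continuous_on (sphere 0 r \<times> sphere 0 r) \<phi>"
    and c2: "continuous_on (sphere 0 r \<times> sphere 0 r) \<psi>"
  shows "torus_integral r (\<lambda>p. \<phi> p + \<psi> p) = torus_integral r \<phi> + torus_integral r \<psi>"
  using torus_integral_sum[OF r, of "{True,False}" "\<lambda>b. if b then \<phi> else \<psi>"] c1 c2 by simp

lemma torus_integral_cmult:
  assumes r: "0 < r" and c1: "continuous_on (sphere 0 r \<times> sphere 0 r) \<phi>"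
  shows "torus_integral r (\<lambda>p. c * \<phi> p) = c * torus_integral r \<phi>"
proof -
  have "torus_integral r (\<lambda>p. c * \<phi> p) = contour_integral (circlepath 0 r)
          (\<lambda>\<zeta>. c * contour_integral (circlepath 0 r) (\<lambda>\<eta>. \<phi> (\<zeta>,\<eta>)))"
    unfolding torus_integral_def
  proof (rule contour_integral_eq)
    fix \<zeta> assume "\<zeta> \<in> path_image (circlepath 0 r)"
    then have z: "\<zeta> \<in> sphere 0 r" using r by simp
    show "contour_integral (circlepath 0 r) (\<lambda>\<eta>. c * \<phi> (\<zeta>, \<eta>)) =
          c * contour_integral (circlepath 0 r) (\<lambda>\<eta>. \<phi> (\<zeta>, \<eta>))"
      by (rule contour_integral_lmul) (use torus_inner_integrable[OF r c1 z] in auto)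
  qed
  also have "\<dots> = c * torus_integral r \<phi>"
    unfolding torus_integral_def by (rule contour_integral_lmul) (use torus_outer_integrable[OF r c1] in auto)
  finally show ?thesis .
qed

lemma norm_torus_integral_le:
  assumes r: "0 < r" and c1: "continuous_on (sphere 0 r \<times> sphere 0 r) \<phi>"
    and B: "0 \<le> B" "\<And>p. p \<in> sphere 0 r \<times> sphere 0 r \<Longrightarrow> norm (\<phi> p) \<le> B"
  shows "norm (torus_integral r \<phi>) \<le> B * (2 * pi * r) * (2 * pi * r)"
  unfolding torus_integral_def
proof (rule has_contour_integral_bound_circlepath)
  show "((\<lambda>\<zeta>. contour_integral (circlepath 0 r) (\<lambda>\<eta>. \<phi> (\<zeta>, \<eta>))) has_contour_integral
     contour_integral (circlepath 0 r) (\<lambda>\<zeta>. contour_integral (circlepath 0 r) (\<lambda>\<eta>. \<phi> (\<zeta>, \<eta>)))) (circlepath 0 r)"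
    by (rule has_contour_integral_integral) (rule torus_outer_integrable[OF r c1])
  show "0 \<le> B * (2 * pi * r)" using B r by simp
  fix \<zeta> :: complex assume "norm (\<zeta> - 0) = r"
  then have z: "\<zeta> \<in> sphere 0 r" by simp
  show "norm (contour_integral (circlepath 0 r) (\<lambda>\<eta>. \<phi> (\<zeta>, \<eta>))) \<le> B * (2 * pi * r)"
  proof (rule has_contour_integral_bound_circlepath)
    show "((\<lambda>\<eta>. \<phi> (\<zeta>, \<eta>)) has_contour_integral contour_integral (circlepath 0 r) (\<lambda>\<eta>. \<phi> (\<zeta>, \<eta>))) (circlepath 0 r)"
      by (rule has_contour_integral_integral) (rule torus_inner_integrable[OF r c1 z])
    fix \<eta> :: complex assume "norm (\<eta> - 0) = r"
    then show "norm (\<phi> (\<zeta>, \<eta>)) \<le> B" using z B(2) by simp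
  qed (use r B in auto)
qed (use r in auto)

lemma cauchy_integral_formula_torus:
  assumes F: "holo2 S F" and r: "0 < r" and sub: "cball 0 r \<times> cball 0 r \<subseteq> S"
    and z: "norm z < r" and w: "norm w < r"
  shows "torus_integral r (\<lambda>p. F p / ((fst p - z) * (snd p - w))) = (2 * of_real pi * \<i>) * (2 * of_real pi * \<i>) * F (z,w)"
proof -
  have contS: "continuous_on S F" by (rule holo2_imp_continuous_on[OF F])
  have inner: "contour_integral (circlepath 0 r) (\<lambda>\<eta>. F (\<zeta>,\<eta>) / ((\<zeta> - z) * (\<eta> - w)))
        = (2 * of_real pi * \<i>) * (F (\<zeta>, w) / (\<zeta> - z))" if zeta: "\<zeta> \<in> sphere 0 r" for \<zeta>
  proof -
    have c: "continuous_on (cball 0 r) (\<lambda>\<eta>. F (\<zeta>,\<eta>))"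
      by (rule continuous_on_compose2[OF contS]) (use sub zeta in \<open>auto intro!: continuous_intros\<close>)
    have h: "(\<lambda>\<eta>. F (\<zeta>,\<eta>)) holomorphic_on ball 0 r"
      by (rule holo2_holomorphic_on_snd_slice[OF F]) (use sub zeta in auto)
    have ci: "((\<lambda>\<eta>. F (\<zeta>,\<eta>) / (\<eta> - w)) has_contour_integral (2 * of_real pi * \<i> * F (\<zeta>,w))) (circlepath 0 r)"
      using Cauchy_integral_circlepath[OF c h, of w] w by simp
    then have "((\<lambda>\<eta>. F (\<zeta>,\<eta>) / (\<eta> - w) * (1 / (\<zeta> - z))) has_contour_integral
            (2 * of_real pi * \<i> * F (\<zeta>,w) * (1 / (\<zeta> - z)))) (circlepath 0 r)"
      by (rule has_contour_integral_rmul)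
    then have "((\<lambda>\<eta>. F (\<zeta>,\<eta>) / ((\<zeta> - z) * (\<eta> - w))) has_contour_integral
            (2 * of_real pi * \<i> * F (\<zeta>,w) * (1 / (\<zeta> - z)))) (circlepath 0 r)"
      by (simp add: divide_inverse inverse_mult_distrib mult_ac)
    then show ?thesis by (simp add: contour_integral_unique)
  qed
  have c2: "continuous_on (cball 0 r) (\<lambda>\<zeta>. F (\<zeta>,w))"
    by (rule continuous_on_compose2[OF contS]) (use sub w in \<open>auto intro!: continuous_intros\<close>)
  have h2: "(\<lambda>\<zeta>. F (\<zeta>,w)) holomorphic_on ball 0 r"
    by (rule holo2_holomorphic_on_fst_slice[OF F]) (use sub w in auto)
  have ci2: "((\<lambda>\<zeta>. F (\<zeta>,w) / (\<zeta> - z)) has_contour_integral (2 * of_real pi * \<i> * F (z,w))) (circlepath 0 r)"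
    using Cauchy_integral_circlepath[OF c2 h2, of z] z by simp
  have "torus_integral r (\<lambda>p. F p / ((fst p - z) * (snd p - w))) =
        contour_integral (circlepath 0 r) (\<lambda>\<zeta>. (2 * of_real pi * \<i>) * (F (\<zeta>, w) / (\<zeta> - z)))"
    unfolding torus_integral_def by (rule contour_integral_eq) (use inner r in auto)
  also have "\<dots> = (2 * of_real pi * \<i>) * (2 * of_real pi * \<i> * F (z,w))"
    by (rule contour_integral_unique, rule has_contour_integral_lmul[OF ci2])
  finally show ?thesis by simp
qed

definition cauchy_kernel_rem :: "nat \<Rightarrow> complex \<times> complex \<Rightarrow> complex \<times> complex \<Rightarrow> complex" where
  "cauchy_kernel_rem N q p = 1 / ((fst p - fst q) * (snd p - snd q)) -
     (\<Sum>(k,l)\<in>deg_le N. fst q ^ k * snd q ^ l / (fst p ^ Suc k * snd p ^ Suc l))"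

definition cauchy_coeff :: "real \<Rightarrow> (complex \<times> complex \<Rightarrow> complex) \<Rightarrow> nat \<Rightarrow> nat \<Rightarrow> complex" where
  "cauchy_coeff r F k l = torus_integral r (\<lambda>p. F p / (fst p ^ Suc k * snd p ^ Suc l))
     / ((2 * of_real pi * \<i>) * (2 * of_real pi * \<i>))"

lemma norm_cauchy_kernel_rem_le:
  fixes z w \<zeta> \<eta> :: complex
  assumes r: "0 < r" and zeta: "norm \<zeta> = r" and eta: "norm \<eta> = r"
    and z: "norm z \<le> t" and w: "norm w \<le> t" and t: "t \<le> r / 2"
  shows "norm (cauchy_kernel_rem N (z,w) (\<zeta>,\<eta>))
          \<le> (real (Suc N) ^ 2 + 4 * real (Suc N) + 4) * (t / r) ^ Suc N / r ^ 2"
proof -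
  have z0: "\<zeta> \<noteq> 0" "\<eta> \<noteq> 0" using zeta eta r by auto
  define u where "u = z / \<zeta>"
  define v where "v = w / \<eta>"
  have nu: "norm u \<le> t / r" unfolding u_def using zeta z r by (simp add: norm_divide divide_right_mono)
  have nv: "norm v \<le> t / r" unfolding v_def using eta w r by (simp add: norm_divide divide_right_mono)
  have tr: "t / r \<le> 1/2" using t r by (simp add: divide_le_eq)
  have e1: "1 / ((\<zeta> - z) * (\<eta> - w)) = 1 / (\<zeta> * \<eta>) * (1 / ((1 - u) * (1 - v)))"
    unfolding u_def v_def using z0 by (simp add: field_simps)
  have e2: "z ^ k * w ^ l / (\<zeta> ^ Suc k * \<eta> ^ Suc l) = 1 / (\<zeta> * \<eta>) * (u ^ k * v ^ l)" for k l
    unfolding u_def v_def using z0 by (simp add: field_simps power_divide)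
  have "cauchy_kernel_rem N (z,w) (\<zeta>,\<eta>)
        = 1 / (\<zeta> * \<eta>) * (1 / ((1 - u) * (1 - v)) - (\<Sum>(k,l)\<in>deg_le N. u ^ k * v ^ l))"
    unfolding cauchy_kernel_rem_def fst_conv snd_conv e1 e2
    by (simp add: sum_distrib_left case_prod_unfold right_diff_distrib)
  also have "norm \<dots> \<le> 1 / r ^ 2 * ((real (Suc N) ^ 2 + 4 * real (Suc N) + 4) * (t / r) ^ Suc N)"
    unfolding norm_mult
  proof (rule mult_mono)
    show "norm (1 / (\<zeta> * \<eta>)) \<le> 1 / r ^ 2" using zeta eta by (simp add: norm_divide norm_mult power2_eq_square)
    show "norm (1 / ((1 - u) * (1 - v)) - (\<Sum>(k, l)\<in>deg_le N. u ^ k * v ^ l))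
      \<le> (real (Suc N) ^ 2 + 4 * real (Suc N) + 4) * (t / r) ^ Suc N"
      by (rule norm_double_geometric_remainder_le[OF nu nv tr])
  qed (use r in auto)
  finally show ?thesis by (simp add: mult.commute)
qed

lemma continuous_on_cauchy_kernel_rem:
  assumes "norm (fst q) < r" "norm (snd q) < r"
  shows "continuous_on (sphere 0 r \<times> sphere 0 r) (cauchy_kernel_rem N q)"
proof -
  have "(fst p - fst q) * (snd p - snd q) \<noteq> 0" "fst p ^ Suc k * snd p ^ Suc l \<noteq> 0"
    if "p \<in> sphere 0 r \<times> sphere 0 r" for p k l
    using that assms by (auto simp: mem_Times_iff)
  then show ?thesis
    unfolding cauchy_kernel_rem_def case_prod_unfold
    by (intro continuous_intros continuous_on_sum ballI) auto
qed

lemma holo2_sub_cauchy_poly: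
  fixes F :: "complex \<times> complex \<Rightarrow> complex"
  assumes F: "holo2 S F" and r: "0 < r" and sub: "cball 0 r \<times> cball 0 r \<subseteq> S"
    and q: "norm (fst q) < r" "norm (snd q) < r"
  shows "(2 * of_real pi * \<i>) * (2 * of_real pi * \<i>) * (F q - poly2 N (cauchy_coeff r F) q)
           = torus_integral r (\<lambda>p. F p * cauchy_kernel_rem N q p)"
proof -
  let ?T = "sphere (0::complex) r \<times> sphere (0::complex) r"
  define c0 :: complex where "c0 = (2 * of_real pi * \<i>) * (2 * of_real pi * \<i>)"
  define K where "K k l p = F p / (fst p ^ Suc k * snd p ^ Suc l)" for k l p
  obtain z w where qzw: "q = (z,w)" by force
  have contF: "continuous_on ?T F"
    by (rule continuous_on_subset[OF holo2_imp_continuous_on[OF F]]) (use sub in auto)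
  have contK: "continuous_on ?T (K k l)" for k l
    unfolding K_def by (intro continuous_intros contF) (use r in auto)
  have contR: "continuous_on ?T (\<lambda>p. F p * cauchy_kernel_rem N q p)"
    by (intro continuous_intros contF continuous_on_cauchy_kernel_rem q)
  have decomp: "(\<lambda>p. F p / ((fst p - z) * (snd p - w)))
          = (\<lambda>p. (\<Sum>kl\<in>deg_le N. z ^ fst kl * w ^ snd kl * K (fst kl) (snd kl) p) + F p * cauchy_kernel_rem N q p)"
    unfolding cauchy_kernel_rem_def K_def qzw
    by (simp add: fun_eq_iff case_prod_unfold sum_distrib_left right_diff_distrib divide_inverse mult_ac)
  have "c0 * F q = torus_integral r (\<lambda>p. F p / ((fst p - z) * (snd p - w)))"
    using cauchy_integral_formula_torus[OF F r sub, of z w] q unfolding qzw c0_def by simp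
  also have "\<dots> = torus_integral r (\<lambda>p. \<Sum>kl\<in>deg_le N. z ^ fst kl * w ^ snd kl * K (fst kl) (snd kl) p)
                     + torus_integral r (\<lambda>p. F p * cauchy_kernel_rem N q p)"
    unfolding decomp by (rule torus_integral_add[OF r _ contR]) (intro continuous_on_sum continuous_intros contK)
  also have "torus_integral r (\<lambda>p. \<Sum>kl\<in>deg_le N. z ^ fst kl * w ^ snd kl * K (fst kl) (snd kl) p)
           = (\<Sum>kl\<in>deg_le N. z ^ fst kl * w ^ snd kl * torus_integral r (K (fst kl) (snd kl)))"
    by (simp add: torus_integral_sum[OF r] torus_integral_cmult[OF r contK] continuous_intros contK)
  also have "\<dots> = c0 * poly2 N (cauchy_coeff r F) q"
    unfolding poly2_eq_sum_deg_le cauchy_coeff_def K_def qzw c0_def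
    by (simp add: sum_distrib_left case_prod_unfold mult_ac)
  finally show ?thesis unfolding c0_def by (simp add: algebra_simps)
qed

text \<open>The coefficients come from expanding the Cauchy kernel of the torus into a geometric
  double series.\<close>
lemma holo2_taylor_expansion:
  fixes F :: "complex \<times> complex \<Rightarrow> complex"
  assumes F: "holo2 S F" and r: "0 < r" and sub: "cball 0 r \<times> cball 0 r \<subseteq> S"
  shows "\<exists>C. \<forall>q. norm q \<le> r / 2 \<longrightarrow> norm (F q - poly2 N (cauchy_coeff r F) q) \<le> C * norm q ^ Suc N"
proof -
  let ?T = "sphere (0::complex) r \<times> sphere (0::complex) r"
  have contT: "continuous_on ?T F"
    by (rule continuous_on_subset[OF holo2_imp_continuous_on[OF F]]) (use sub in auto)
  have "compact (F ` ?T)" by (rule compact_continuous_image[OF contT]) (intro compact_Times compact_sphere)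
  then obtain M where M: "M > 0" "\<And>p. p \<in> ?T \<Longrightarrow> norm (F p) \<le> M"
    using compact_imp_bounded bounded_pos by (metis image_eqI)
  define CN where "CN = (real (Suc N) ^ 2 + 4 * real (Suc N) + 4)"
  have CN0: "0 \<le> CN" unfolding CN_def by simp
  show ?thesis
  proof (intro exI[of _ "M * CN / r ^ Suc N"] allI impI)
    fix q :: "complex \<times> complex" assume q: "norm q \<le> r / 2"
    have nq: "norm (fst q) \<le> norm q" "norm (snd q) \<le> norm q"
      by (rule norm_fst_le_norm norm_snd_le_norm)+
    have qr: "norm (fst q) < r" "norm (snd q) < r" using nq q r by auto
    have bnd: "norm (F p * cauchy_kernel_rem N q p) \<le> M * (CN * (norm q / r) ^ Suc N / r ^ 2)"
      if "p \<in> ?T" for p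
      unfolding norm_mult
    proof (rule mult_mono)
      show "norm (F p) \<le> M" using M that by auto
      show "norm (cauchy_kernel_rem N q p) \<le> CN * (norm q / r) ^ Suc N / r ^ 2"
        using norm_cauchy_kernel_rem_le[OF r _ _ nq q, of "fst p" "snd p" N] that
        unfolding CN_def by (simp add: mem_Times_iff)
    qed (use M in auto)
    have "(2*pi)*(2*pi) * norm (F q - poly2 N (cauchy_coeff r F) q)
            = norm (torus_integral r (\<lambda>p. F p * cauchy_kernel_rem N q p))"
      using arg_cong[OF holo2_sub_cauchy_poly[OF F r sub qr, of N], of norm]
      by (simp add: norm_mult)
    also have "\<dots> \<le> M * (CN * (norm q / r) ^ Suc N / r ^ 2) * (2 * pi * r) * (2 * pi * r)"
      by (rule norm_torus_integral_le[OF r _ _ bnd])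
        (use M CN0 r in \<open>auto intro!: continuous_intros continuous_on_cauchy_kernel_rem contT qr\<close>)
    also have "\<dots> = (2*pi)*(2*pi) * (M * CN / r ^ Suc N * norm q ^ Suc N)"
      using r by (simp add: power_divide field_simps power2_eq_square)
    finally show "norm (F q - poly2 N (cauchy_coeff r F) q) \<le> M * CN / r ^ Suc N * norm q ^ Suc N"
      by (rule mult_left_le_imp_le) simp
  qed
qed

section \<open>Uniqueness of expansions and composition\<close>

lemma poly_coeffs_zero_if_small:
  fixes d :: "nat \<Rightarrow> complex"
  assumes "0 < \<delta>" "\<And>s. 0 < norm s \<Longrightarrow> norm s < \<delta> \<Longrightarrow> norm (\<Sum>k\<le>n. d k * s ^ k) \<le> C * norm s ^ Suc n"
  shows "k \<le> n \<Longrightarrow> d k = 0"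
  using assms
proof (induction n arbitrary: d C k)
  case 0
  have lim1: "((\<lambda>s. \<Sum>k\<le>(0::nat). d k * s ^ k) \<longlongrightarrow> d 0) (at 0)" by simp
  have "\<forall>\<^sub>F s in at (0::complex). norm (\<Sum>k\<le>(0::nat). d k * s ^ k) \<le> C * norm s ^ Suc 0"
    using 0 unfolding eventually_at by (intro exI[of _ \<delta>]) (auto simp: dist_norm)
  moreover have "((\<lambda>s::complex. C * norm s ^ Suc 0) \<longlongrightarrow> 0) (at 0)"
    by (auto intro!: tendsto_eq_intros)
  ultimately have lim2: "((\<lambda>s. \<Sum>k\<le>(0::nat). d k * s ^ k) \<longlongrightarrow> 0) (at 0)"
    by (rule Lim_null_comparison)
  have "d 0 = 0" using tendsto_unique[OF _ lim1 lim2] by simp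
  then show ?case using 0 by simp
next
  case (Suc n)
  define f where "f s = (\<Sum>k\<le>Suc n. d k * s ^ k)" for s
  have lim1: "(f \<longlongrightarrow> d 0) (at 0)"
  proof -
    have "isCont f 0" unfolding f_def by (intro continuous_intros)
    moreover have "f 0 = d 0" unfolding f_def by (simp add: zero_power)
    ultimately show ?thesis by (metis isCont_def)
  qed
  have "\<forall>\<^sub>F s in at (0::complex). norm (f s) \<le> C * norm s ^ Suc (Suc n)"
    using Suc.prems unfolding eventually_at f_def by (intro exI[of _ \<delta>]) (auto simp: dist_norm)
  moreover have "((\<lambda>s::complex. C * norm s ^ Suc (Suc n)) \<longlongrightarrow> 0) (at 0)"
    by (auto intro!: tendsto_eq_intros)
  ultimately have lim2: "(f \<longlongrightarrow> 0) (at 0)"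
    by (rule Lim_null_comparison)
  have d0: "d 0 = 0" using tendsto_unique[OF _ lim1 lim2] by simp
  have fs: "f s = s * (\<Sum>k\<le>n. d (Suc k) * s ^ k)" for s
    unfolding f_def by (subst sum.atMost_Suc_shift) (simp add: d0 sum_distrib_left mult_ac)
  have IH: "d (Suc k') = 0" if "k' \<le> n" for k'
  proof (rule Suc.IH[of k' "\<lambda>k. d (Suc k)" C, OF that Suc.prems(2)])
    fix s :: complex assume s: "0 < norm s" "norm s < \<delta>"
    have "norm s * norm (\<Sum>k\<le>n. d (Suc k) * s ^ k) \<le> norm s * (C * norm s ^ Suc n)"
      using Suc.prems(3)[OF s] unfolding f_def[symmetric] fs by (simp add: norm_mult mult_ac)
    then show "norm (\<Sum>k\<le>n. d (Suc k) * s ^ k) \<le> C * norm s ^ Suc n"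
      using s(1) by (rule mult_left_le_imp_le)
  qed
  show ?case
  proof (cases k)
    case 0 then show ?thesis using d0 by simp
  next
    case (Suc k') then show ?thesis using IH Suc.prems(1) by simp
  qed
qed

lemma poly2_on_line:
  "poly2 j d (s * z0, s) = (\<Sum>n\<le>j. (\<Sum>k\<le>n. d k (n - k) * z0 ^ k) * s ^ n)"
proof -
  have "poly2 j d (s * z0, s) = (\<Sum>(k,l)\<in>deg_le j. d k l * (s * z0) ^ k * s ^ l)"
    by (simp add: poly2_eq_sum_deg_le)
  also have "\<dots> = (\<Sum>n\<le>j. \<Sum>k\<le>n. d k (n - k) * (s * z0) ^ k * s ^ (n - k))"
    unfolding deg_le_def by (rule sum.triangle_reindex_eq)
  also have "\<dots> = (\<Sum>n\<le>j. (\<Sum>k\<le>n. d k (n - k) * z0 ^ k) * s ^ n)"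
  proof (rule sum.cong[OF refl])
    fix n assume "n \<in> {..j}"
    have "d k (n - k) * (s * z0) ^ k * s ^ (n - k) = d k (n - k) * z0 ^ k * s ^ n" if "k \<le> n" for k
    proof -
      have "s ^ k * s ^ (n - k) = s ^ n" using that by (simp add: power_add[symmetric])
      then show ?thesis by (simp add: power_mult_distrib mult_ac)
    qed
    then have "(\<Sum>k\<le>n. d k (n - k) * (s * z0) ^ k * s ^ (n - k)) = (\<Sum>k\<le>n. d k (n - k) * z0 ^ k * s ^ n)"
      by (intro sum.cong) auto
    then show "(\<Sum>k\<le>n. d k (n - k) * (s * z0) ^ k * s ^ (n - k)) = (\<Sum>k\<le>n. d k (n - k) * z0 ^ k) * s ^ n"
      by (simp add: sum_distrib_right)
  qed
  finally show ?thesis .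
qed

text \<open>On each complex line through the origin the polynomial restricts to a one-variable
  polynomial of degree at most j that is O(|s|^(j+1)), hence zero.\<close>
lemma poly2_coeffs_zero_if_small:
  assumes "0 < \<delta>" "\<And>q. 0 < norm q \<Longrightarrow> norm q < \<delta> \<Longrightarrow> norm (poly2 j d q) \<le> C * norm q ^ Suc j"
    and "k + l \<le> j"
  shows "d k l = 0"
proof -
  have e0: "(\<Sum>k\<le>n. d k (n - k) * z0 ^ k) = 0" if n: "n \<le> j" for z0 n
  proof -
    define \<kappa> where "\<kappa> = norm (z0, 1::complex)"
    have k1: "\<kappa> \<ge> 1" unfolding \<kappa>_def norm_Pair by (simp add: real_le_rsqrt)
    have nq: "norm (s * z0, s) = norm s * \<kappa>" for s
    proof -
      have "(cmod s)\<^sup>2 * (cmod z0)\<^sup>2 + (cmod s)\<^sup>2 = (cmod s)\<^sup>2 * ((cmod z0)\<^sup>2 + 1)" by algebra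
      then show ?thesis unfolding \<kappa>_def norm_Pair
        by (simp add: norm_mult power_mult_distrib real_sqrt_mult)
    qed
    show ?thesis
    proof (rule poly_coeffs_zero_if_small[where n=j and \<delta>="\<delta>/\<kappa>" and C="C*\<kappa>^Suc j", OF _ _ n])
      show "0 < \<delta> / \<kappa>" using assms(1) k1 by simp
      fix s :: complex assume s: "0 < norm s" "norm s < \<delta> / \<kappa>"
      have "0 < norm (s * z0, s)" "norm (s * z0, s) < \<delta>"
        using s k1 unfolding nq by (auto simp: pos_less_divide_eq)
      from assms(2)[OF this] show "norm (\<Sum>k\<le>j. (\<Sum>i\<le>k. d i (k - i) * z0 ^ i) * s ^ k) \<le> C * \<kappa> ^ Suc j * norm s ^ Suc j"
        unfolding poly2_on_line nq by (simp add: power_mult_distrib mult_ac)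
    qed
  qed
  have "d i (k + l - i) = 0" if "i \<le> k + l" for i
  proof (rule poly_coeffs_zero_if_small[where n="k+l" and \<delta>=1 and C=0 and d="\<lambda>i. d i (k + l - i)", OF _ _ that])
    fix s :: complex
    show "norm (\<Sum>i\<le>k+l. d i (k + l - i) * s ^ i) \<le> 0 * norm s ^ Suc (k + l)"
      using e0[OF assms(3), of s] by simp
  qed simp
  from this[of k] show ?thesis by simp
qed

lemma norm_poly2_tail_le:
  assumes "j \<le> N" "0 \<le> K"
  shows "\<exists>C. \<forall>X t. 0 \<le> t \<and> t \<le> 1 \<and> norm (fst X) \<le> K * t \<and> norm (snd X) \<le> K * t \<longrightarrow>
            norm (poly2 N c X - poly2 j c X) \<le> C * t ^ Suc j"
proof (intro exI[of _ "\<Sum>(k,l)\<in>deg_le N - deg_le j. norm (c k l) * K ^ (k + l)"] allI impI)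
  fix X :: "complex \<times> complex" and t :: real
  assume h: "0 \<le> t \<and> t \<le> 1 \<and> norm (fst X) \<le> K * t \<and> norm (snd X) \<le> K * t"
  have "poly2 N c X - poly2 j c X = (\<Sum>(k,l)\<in>deg_le N - deg_le j. c k l * fst X ^ k * snd X ^ l)"
    unfolding poly2_eq_sum_deg_le by (subst sum.subset_diff[OF deg_le_mono[OF assms(1)]]) auto
  also have "norm \<dots> \<le> (\<Sum>(k,l)\<in>deg_le N - deg_le j. norm (c k l) * K ^ (k + l) * t ^ Suc j)"
  proof (rule order_trans[OF norm_sum sum_mono])
    fix kl assume kl: "kl \<in> deg_le N - deg_le j"
    obtain k l where kl': "kl = (k,l)" by force
    have jl: "Suc j \<le> k + l" using kl unfolding kl' deg_le_def by auto
    have "norm (c k l * fst X ^ k * snd X ^ l) = norm (c k l) * norm (fst X) ^ k * norm (snd X) ^ l"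
      by (simp add: norm_mult norm_power)
    also have "\<dots> \<le> norm (c k l) * (K * t) ^ k * (K * t) ^ l"
      using h assms(2) by (intro mult_mono power_mono mult_nonneg_nonneg zero_le_power) auto
    also have "\<dots> = norm (c k l) * K ^ (k + l) * t ^ (k + l)"
      by (simp add: power_add power_mult_distrib mult_ac)
    also have "\<dots> \<le> norm (c k l) * K ^ (k + l) * t ^ Suc j"
      by (intro mult_left_mono power_decreasing jl) (use h assms(2) in auto)
    finally show "norm (case kl of (k, l) \<Rightarrow> c k l * fst X ^ k * snd X ^ l)
         \<le> (case kl of (k, l) \<Rightarrow> norm (c k l) * K ^ (k + l) * t ^ Suc j)" by (simp add: kl')
  qed
  also have "\<dots> = (\<Sum>(k,l)\<in>deg_le N - deg_le j. norm (c k l) * K ^ (k + l)) * t ^ Suc j"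
    by (simp add: sum_distrib_right case_prod_unfold)
  finally show "norm (poly2 N c X - poly2 j c X) \<le> (\<Sum>(k,l)\<in>deg_le N - deg_le j. norm (c k l) * K ^ (k + l)) * t ^ Suc j" .
qed

lemma poly2_diff: "poly2 j (\<lambda>k l. b k l - c k l) q = poly2 j b q - poly2 j c q"
  unfolding poly2_def by (simp add: sum_subtractf left_diff_distrib)

lemma poly2_coeffs_eq_if_close:
  assumes "0 < \<delta>" "\<And>q. 0 < norm q \<Longrightarrow> norm q < \<delta> \<Longrightarrow> norm (poly2 j b q - poly2 j c q) \<le> C * norm q ^ Suc j"
    and "k + l \<le> j"
  shows "b k l = c k l"
  using poly2_coeffs_zero_if_small[of \<delta> j "\<lambda>k l. b k l - c k l" C k l] assms
  by (simp add: poly2_diff)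

lemma holo2_poly2:
  assumes "holo2 S h1" "holo2 S h2"
  shows "holo2 S (\<lambda>q. poly2 N a (h1 q, h2 q))"
  unfolding poly2_def fst_conv snd_conv
  by (intro holo2_sum holo2_mult holo2_power holo2_const assms finite_atMost)

text \<open>One family a' works for every order N: the Taylor coefficients of degree at most j of the
  composition do not change when terms of degree above j are added to the polynomial.\<close>
lemma poly2_compose_expansion:
  assumes h1: "holo2 S h1" and h2: "holo2 S h2" and r: "0 < r" and sub: "cball 0 r \<times> cball 0 r \<subseteq> S"
    and K: "0 \<le> K" and \<delta>: "0 < \<delta>" and Hb: "\<And>q. norm q < \<delta> \<Longrightarrow> norm (h1 q, h2 q) \<le> K * norm q"
  shows "\<exists>a'. \<forall>N. \<exists>C \<delta>. \<delta> > 0 \<and>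
           (\<forall>q. norm q < \<delta> \<longrightarrow> norm (poly2 N a (h1 q, h2 q) - poly2 N a' q) \<le> C * norm q ^ Suc N)"
proof -
  define F where "F N q = poly2 N a (h1 q, h2 q)" for N q
  define B where "B N = cauchy_coeff r (F N)" for N
  have B: "\<exists>C. \<forall>q. norm q \<le> r / 2 \<longrightarrow> norm (F N q - poly2 M (B N) q) \<le> C * norm q ^ Suc M" for N M
    unfolding F_def B_def by (rule holo2_taylor_expansion[OF holo2_poly2[OF h1 h2] r sub])
  define a' where "a' k l = B (k + l) k l" for k l
  have coef: "B N k l = a' k l" if "k + l \<le> N" for N k l
  proof -
    define j where "j = k + l"
    have jN: "j \<le> N" using that j_def by simp
    obtain C1 where C1: "\<And>q. norm q \<le> r / 2 \<Longrightarrow> norm (F N q - poly2 j (B N) q) \<le> C1 * norm q ^ Suc j"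
      using B by blast
    obtain C2 where C2: "\<And>q. norm q \<le> r / 2 \<Longrightarrow> norm (F j q - poly2 j (B j) q) \<le> C2 * norm q ^ Suc j"
      using B by blast
    obtain C3 where C3: "\<And>X t. 0 \<le> t \<and> t \<le> 1 \<and> norm (fst X) \<le> K * t \<and> norm (snd X) \<le> K * t \<Longrightarrow>
            norm (poly2 N a X - poly2 j a X) \<le> C3 * t ^ Suc j"
      using norm_poly2_tail_le[OF jN K, of a] by metis
    define d where "d = min \<delta> (min (r/2) 1)"
    have "B N k l = B j k l"
    proof (rule poly2_coeffs_eq_if_close[of d, OF _ _ order.refl[of "k+l"], unfolded j_def[symmetric]])
      show "0 < d" unfolding d_def using \<delta> r by simp
      fix q :: "complex \<times> complex" assume q: "0 < norm q" "norm q < d"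
      have q1: "norm q \<le> 1" "norm q \<le> r/2" "norm q < \<delta>" using q unfolding d_def by auto
      have t3: "norm (F N q - F j q) \<le> C3 * norm q ^ Suc j"
        using C3[of "norm q" "(h1 q, h2 q)"] q1 Hb[OF q1(3)]
          norm_fst_le_norm[of "(h1 q, h2 q)"] norm_snd_le_norm[of "(h1 q, h2 q)"]
        unfolding F_def by auto
      have "poly2 j (B N) q - poly2 j (B j) q = (F N q - F j q) - (F N q - poly2 j (B N) q) + (F j q - poly2 j (B j) q)"
        by simp
      also have "norm \<dots> \<le> norm (F N q - F j q) + norm (F N q - poly2 j (B N) q) + norm (F j q - poly2 j (B j) q)"
        by (smt (verit) norm_triangle_ineq norm_triangle_ineq4)
      also have "\<dots> \<le> (C3 + C1 + C2) * norm q ^ Suc j"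
        using t3 C1[OF q1(2)] C2[OF q1(2)] by (simp add: algebra_simps)
      finally show "norm (poly2 j (B N) q - poly2 j (B j) q) \<le> (C3 + C1 + C2) * norm q ^ Suc j" .
    qed
    then show ?thesis unfolding a'_def j_def by simp
  qed
  show ?thesis
  proof (intro exI[of _ a'] allI)
    fix N
    obtain C where C: "\<And>q. norm q \<le> r / 2 \<Longrightarrow> norm (F N q - poly2 N (B N) q) \<le> C * norm q ^ Suc N"
      using B by blast
    have "poly2 N (B N) q = poly2 N a' q" for q
      unfolding poly2_def by (intro sum.cong refl) (auto simp: coef)
    then show "\<exists>C \<delta>. \<delta> > 0 \<and> (\<forall>q. norm q < \<delta> \<longrightarrow> norm (poly2 N a (h1 q, h2 q) - poly2 N a' q) \<le> C * norm q ^ Suc N)"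
      using C r unfolding F_def by (intro exI[of _ C] exI[of _ "r/2"]) auto
  qed
qed

lemma norm_power_le_components:
  fixes q :: "complex \<times> complex"
  shows "norm q ^ N \<le> 2 ^ N * (norm (fst q) ^ N + norm (snd q) ^ N)"
proof -
  define m where "m = max (norm (fst q)) (norm (snd q))"
  have "norm q \<le> norm (fst q) + norm (snd q)" by (metis norm_Pair_le prod.collapse)
  also have "\<dots> \<le> 2 * m" unfolding m_def by auto
  finally have "norm q ^ N \<le> (2 * m) ^ N" by (intro power_mono) auto
  also have "\<dots> = 2 ^ N * m ^ N" by (simp add: power_mult_distrib)
  also have "m ^ N \<le> norm (fst q) ^ N + norm (snd q) ^ N"
    unfolding m_def by (cases "norm (fst q) \<le> norm (snd q)") (auto simp: max_def)
  finally show ?thesis by simp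
qed

lemma asymp_rep_poly2:
  "asymp_rep g a S \<longleftrightarrow> (\<forall>N \<epsilon>. \<epsilon> > 0 \<longrightarrow> (\<forall>\<^sub>F q in at (0,0) within S.
     norm (g q - poly2 N a q) \<le> \<epsilon> * (norm (fst q) ^ N + norm (snd q) ^ N)))"
  unfolding asymp_rep_def poly2_def by blast

lemma norm_components_power_le:
  fixes h q :: "complex \<times> complex"
  assumes "norm h \<le> K * norm q" "0 \<le> K"
  shows "norm (fst h) ^ N + norm (snd h) ^ N \<le> 2 * K ^ N * 2 ^ N * (norm (fst q) ^ N + norm (snd q) ^ N)"
proof -
  have "norm (fst h) ^ N \<le> (K * norm q) ^ N" "norm (snd h) ^ N \<le> (K * norm q) ^ N"
    using assms norm_fst_le_norm[of h] norm_snd_le_norm[of h] by (auto intro!: power_mono)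
  then have "norm (fst h) ^ N + norm (snd h) ^ N \<le> 2 * K ^ N * norm q ^ N"
    by (simp add: power_mult_distrib)
  also have "\<dots> \<le> 2 * K ^ N * (2 ^ N * (norm (fst q) ^ N + norm (snd q) ^ N))"
    using assms norm_power_le_components[of q N] by (intro mult_left_mono) auto
  finally show ?thesis by (simp add: mult_ac)
qed

lemma power_Suc_le_components:
  fixes q :: "complex \<times> complex"
  assumes "norm q \<le> \<epsilon> / (2 * 2 ^ N * (\<bar>C\<bar> + 1))" "\<epsilon> > 0"
  shows "C * norm q ^ Suc N \<le> \<epsilon> / 2 * (norm (fst q) ^ N + norm (snd q) ^ N)"
proof -
  have "C * norm q ^ Suc N \<le> (\<bar>C\<bar> + 1) * norm q * norm q ^ N"
    by (simp add: mult_right_mono mult.assoc)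
  also have "\<dots> \<le> (\<bar>C\<bar> + 1) * (\<epsilon> / (2 * 2 ^ N * (\<bar>C\<bar> + 1))) * (2 ^ N * (norm (fst q) ^ N + norm (snd q) ^ N))"
    using assms norm_power_le_components[of q N] by (intro mult_mono) auto
  also have "\<dots> = \<epsilon> / 2 * (norm (fst q) ^ N + norm (snd q) ^ N)"
  proof -
    have "(\<bar>C\<bar> + 1) * (\<epsilon> / (2 * 2 ^ N * (\<bar>C\<bar> + 1))) = \<epsilon> / (2 * 2 ^ N)"
      by (simp add: add_nonneg_pos)
    then show ?thesis by simp
  qed
  finally show ?thesis .
qed

lemma asymp_rep_compose:
  assumes A: "asymp_rep g a S" and S0: "(0,0) \<notin> S"
    and d0: "d0 > 0" and map: "\<And>q. q \<in> S' \<Longrightarrow> norm q < d0 \<Longrightarrow> H q \<in> S"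
    and K: "K > 0" and Hb: "\<And>q. norm q < d0 \<Longrightarrow> norm (H q) \<le> K * norm q"
    and E: "\<And>N. \<exists>C \<delta>. \<delta> > 0 \<and> (\<forall>q. norm q < \<delta> \<longrightarrow> norm (poly2 N a (H q) - poly2 N a' q) \<le> C * norm q ^ Suc N)"
  shows "asymp_rep (\<lambda>q. g (H q)) a' S'"
  unfolding asymp_rep_poly2
proof (intro allI impI)
  fix N :: nat and \<epsilon> :: real assume e: "\<epsilon> > 0"
  obtain C \<delta> where C: "\<delta> > 0" "\<And>q. norm q < \<delta> \<Longrightarrow> norm (poly2 N a (H q) - poly2 N a' q) \<le> C * norm q ^ Suc N"
    using E[of N] by blast
  define e1 where "e1 = \<epsilon> / (4 * K ^ N * 2 ^ N)"
  have "e1 > 0" unfolding e1_def using e K by simp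
  then obtain d1 where d1: "d1 > 0" "\<And>y. y \<in> S \<Longrightarrow> y \<noteq> (0,0) \<Longrightarrow> dist y (0,0) < d1 \<Longrightarrow>
       norm (g y - poly2 N a y) \<le> e1 * (norm (fst y) ^ N + norm (snd y) ^ N)"
    using A unfolding asymp_rep_poly2 eventually_at by blast
  define d where "d = min (min d0 \<delta>) (min (d1 / K) (\<epsilon> / (2 * 2 ^ N * (\<bar>C\<bar> + 1))))"
  show "\<forall>\<^sub>F q in at (0, 0) within S'. norm (g (H q) - poly2 N a' q) \<le> \<epsilon> * (norm (fst q) ^ N + norm (snd q) ^ N)"
    unfolding eventually_at
  proof (intro exI[of _ d] conjI ballI impI)
    show "d > 0" unfolding d_def using d0 C(1) d1(1) K e by auto
    fix q assume q: "q \<in> S'" "q \<noteq> (0,0) \<and> dist q (0,0) < d"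
    have "norm q < d" using q by (simp add: dist_norm zero_prod_def[symmetric])
    then have n: "norm q < d0" "norm q < \<delta>" "norm q < d1 / K" "norm q < \<epsilon> / (2 * 2 ^ N * (\<bar>C\<bar> + 1))"
      unfolding d_def by simp_all
    have nq: "norm q < d0" "norm q < \<delta>" "K * norm q < d1" "norm q \<le> \<epsilon> / (2 * 2 ^ N * (\<bar>C\<bar> + 1))"
      using n(1,2) n(3) K less_imp_le[OF n(4)] by (simp_all add: pos_less_divide_eq mult.commute)
    have HS: "H q \<in> S" and H0: "H q \<noteq> (0,0)" using map[OF q(1) nq(1)] S0 by auto
    have nH: "norm (H q) \<le> K * norm q" using Hb[OF nq(1)] .
    then have dH: "dist (H q) (0,0) < d1" using nq(3) by (simp add: dist_norm zero_prod_def[symmetric])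
    have "norm (g (H q) - poly2 N a (H q)) \<le> e1 * (2 * K ^ N * 2 ^ N * (norm (fst q) ^ N + norm (snd q) ^ N))"
      using d1(2)[OF HS H0 dH] norm_components_power_le[OF nH less_imp_le[OF K], of N] \<open>e1 > 0\<close>
      by (meson mult_left_mono less_imp_le order_trans)
    also have "\<dots> = \<epsilon> / 2 * (norm (fst q) ^ N + norm (snd q) ^ N)"
      unfolding e1_def using K by (simp add: field_simps)
    finally have "norm (g (H q) - poly2 N a (H q)) \<le> \<epsilon> / 2 * (norm (fst q) ^ N + norm (snd q) ^ N)" .
    moreover have "norm (poly2 N a (H q) - poly2 N a' q) \<le> \<epsilon> / 2 * (norm (fst q) ^ N + norm (snd q) ^ N)"
      using C(2)[OF nq(2)] power_Suc_le_components[OF nq(4) e] by linarith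
    ultimately show "norm (g (H q) - poly2 N a' q) \<le> \<epsilon> * (norm (fst q) ^ N + norm (snd q) ^ N)"
      using norm_triangle_ineq[of "g (H q) - poly2 N a (H q)" "poly2 N a (H q) - poly2 N a' q"] by simp
  qed
qed

section \<open>Differentiability of real-analytic functions\<close>

lemma has_derivative_of_quadratic_remainder:
  fixes f :: "'a::real_normed_vector \<Rightarrow> 'b::real_normed_vector"
  assumes L: "bounded_linear L" and \<delta>: "0 < \<delta>"
    and R: "\<And>y. norm (y - p) \<le> \<delta> \<Longrightarrow> norm (f y - f p - L (y - p)) \<le> C * (norm (y - p))\<^sup>2"
  shows "(f has_derivative L) (at p)"
  unfolding has_derivative_at_alt
proof (intro conjI L allI impI)
  fix \<epsilon> :: real assume \<epsilon>: "\<epsilon> > 0"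
  define d where "d = min \<delta> (\<epsilon> / (\<bar>C\<bar> + 1))"
  show "\<exists>d>0. \<forall>y. norm (y - p) < d \<longrightarrow> norm (f y - f p - L (y - p)) \<le> \<epsilon> * norm (y - p)"
  proof (intro exI[of _ d] conjI allI impI)
    show "d > 0" unfolding d_def using \<delta> \<epsilon> by simp
    fix y assume y: "norm (y - p) < d"
    have "(\<bar>C\<bar> + 1) * norm (y - p) \<le> \<epsilon>"
      using y unfolding d_def by (simp add: pos_less_divide_eq mult.commute)
    moreover have "C * norm (y - p) \<le> (\<bar>C\<bar> + 1) * norm (y - p)"
      by (intro mult_right_mono) auto
    ultimately have "C * norm (y - p) * norm (y - p) \<le> \<epsilon> * norm (y - p)"
      by (intro mult_right_mono) auto
    then have "C * (norm (y - p))\<^sup>2 \<le> \<epsilon> * norm (y - p)"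
      by (simp add: power2_eq_square mult.assoc)
    moreover have "norm (y - p) \<le> \<delta>" using y unfolding d_def by simp
    ultimately show "norm (f y - f p - L (y - p)) \<le> \<epsilon> * norm (y - p)"
      using R[of y] by linarith
  qed
qed

definition monomial4 :: "(nat \<times> nat \<times> nat \<times> nat \<Rightarrow> real) \<Rightarrow> complex \<times> complex \<Rightarrow> nat \<times> nat \<times> nat \<times> nat \<Rightarrow> real" where
  "monomial4 c h = (\<lambda>(i,j,k,l). c (i,j,k,l) * Re (fst h) ^ i * Im (fst h) ^ j * Re (snd h) ^ k * Im (snd h) ^ l)"

definition deg4 :: "nat \<times> nat \<times> nat \<times> nat \<Rightarrow> nat" where
  "deg4 = (\<lambda>(i,j,k,l). i + j + k + l)"

text \<open>Evaluating the convergent series at a point where all four coordinate increments equal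
  the same positive number shows that the coefficients are absolutely summable there.\<close>
lemma real_analytic_on_abs_summable:
  assumes "real_analytic_on U \<rho>" "p \<in> U"
  obtains c \<delta> where "\<delta> > 0" "\<And>q. norm (q - p) \<le> \<delta> \<Longrightarrow> (monomial4 c (q - p) has_sum \<rho> q) UNIV"
    "(\<lambda>x. \<bar>c x\<bar> * \<delta> ^ deg4 x) summable_on UNIV"
proof -
  obtain e c where e: "e > 0" and hs: "\<And>q. q \<in> ball p e \<Longrightarrow> (monomial4 c (q - p) has_sum \<rho> q) UNIV"
    using assms unfolding real_analytic_on_def monomial4_def by fastforce
  define \<delta> where "\<delta> = e / 4"
  have d0: "\<delta> > 0" unfolding \<delta>_def using e by simp
  define h0 where "h0 = (Complex \<delta> \<delta>, Complex \<delta> \<delta>)"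
  have "norm h0 = sqrt ((2 * \<delta>)\<^sup>2)"
    unfolding h0_def by (simp add: norm_Pair cmod_def power2_eq_square algebra_simps)
  then have "norm h0 = 2 * \<delta>" using d0 by (subst (asm) real_sqrt_abs) simp
  then have "p + h0 \<in> ball p e" unfolding \<delta>_def using e by (simp add: dist_norm)
  then have "monomial4 c h0 summable_on UNIV" using hs summable_on_def by fastforce
  then have "(\<lambda>x. norm (monomial4 c h0 x)) summable_on UNIV"
    using summable_on_iff_abs_summable_on_real by blast
  moreover have "norm (monomial4 c h0 x) = \<bar>c x\<bar> * \<delta> ^ deg4 x" for x
    unfolding monomial4_def deg4_def h0_def using d0 by (cases x) (auto simp: abs_mult power_add)
  ultimately have "(\<lambda>x. \<bar>c x\<bar> * \<delta> ^ deg4 x) summable_on UNIV" by simp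
  moreover have "q \<in> ball p e" if "norm (q - p) \<le> \<delta>" for q
    using that d0 unfolding \<delta>_def by (simp add: dist_norm norm_minus_commute)
  ultimately show thesis using that[of \<delta> c] d0 hs by blast
qed

text \<open>The affine part of the series consists of the five monomials of degree at most one; the
  remaining monomials, of degree at least two, are dominated by a convergent series times the
  square of the distance.\<close>
lemma real_analytic_on_quadratic_remainder:
  assumes "real_analytic_on U \<rho>" "p \<in> U"
  obtains L \<delta> C where "bounded_linear L" "\<delta> > 0"
    "\<And>q. norm (q - p) \<le> \<delta> \<Longrightarrow> norm (\<rho> q - \<rho> p - L (q - p)) \<le> C * (norm (q - p))\<^sup>2"
proof -
  obtain c \<delta> where d0: "\<delta> > 0" and hs: "\<And>q. norm (q - p) \<le> \<delta> \<Longrightarrow> (monomial4 c (q - p) has_sum \<rho> q) UNIV"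
    and gs: "(\<lambda>x. \<bar>c x\<bar> * \<delta> ^ deg4 x) summable_on UNIV"
    using real_analytic_on_abs_summable[OF assms] by blast
  define Lset :: "(nat \<times> nat \<times> nat \<times> nat) set" where
    "Lset = {(0,0,0,0),(1,0,0,0),(0,1,0,0),(0,0,1,0),(0,0,0,1)}"
  define R where "R = UNIV - Lset"
  define g where "g x = \<bar>c x\<bar> * \<delta> ^ deg4 x" for x
  have finL: "finite Lset" unfolding Lset_def by simp
  have degR: "2 \<le> deg4 x" if "x \<in> R" for x
  proof -
    obtain i j k l where x: "x = (i,j,k,l)" by (cases x) auto
    show ?thesis using that unfolding R_def Lset_def x deg4_def by (cases i; cases j; cases k; cases l) auto
  qed
  have gR: "g summable_on R" unfolding g_def by (rule summable_on_subset_banach[OF gs]) auto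
  define G where "G = infsum g R"
  define L where "L h = c (1,0,0,0) * Re (fst h) + c (0,1,0,0) * Im (fst h) + c (0,0,1,0) * Re (snd h)
                          + c (0,0,0,1) * Im (snd h)" for h :: "complex \<times> complex"
  have bl: "bounded_linear L"
    unfolding linear_conv_bounded_linear[symmetric] by (rule linearI) (auto simp: L_def algebra_simps)
  have affine: "(\<Sum>x\<in>Lset. monomial4 c h x) = c (0,0,0,0) + L h" for h
    unfolding Lset_def monomial4_def L_def by simp
  have rem: "norm (\<rho> q - c (0,0,0,0) - L (q - p)) \<le> G / \<delta>\<^sup>2 * (norm (q - p))\<^sup>2"
    if q: "norm (q - p) \<le> \<delta>" for q
  proof -
    define t where "t = norm (q - p)"
    have t: "0 \<le> t" "t \<le> \<delta>" using q unfolding t_def by auto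
    have hq: "(monomial4 c (q - p) has_sum \<rho> q) UNIV" by (rule hs[OF q])
    have sR: "monomial4 c (q - p) summable_on R"
      by (rule summable_on_subset_banach[of _ UNIV]) (use hq summable_on_def in auto)
    have "\<rho> q = infsum (monomial4 c (q - p)) (Lset \<union> R)" using hq unfolding R_def by (simp add: infsumI)
    also have "\<dots> = (\<Sum>x\<in>Lset. monomial4 c (q - p) x) + infsum (monomial4 c (q - p)) R"
      using finL sR by (subst infsum_Un_disjoint) (auto simp: R_def)
    finally have split: "\<rho> q - c (0,0,0,0) - L (q - p) = infsum (monomial4 c (q - p)) R"
      unfolding affine by simp
    have coord: "\<bar>Re (fst (q - p))\<bar> \<le> t" "\<bar>Im (fst (q - p))\<bar> \<le> t"
                "\<bar>Re (snd (q - p))\<bar> \<le> t" "\<bar>Im (snd (q - p))\<bar> \<le> t"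
      using abs_Re_le_cmod[of "fst (q - p)"] abs_Im_le_cmod[of "fst (q - p)"]
            abs_Re_le_cmod[of "snd (q - p)"] abs_Im_le_cmod[of "snd (q - p)"]
            norm_fst_le_norm[of "q - p"] norm_snd_le_norm[of "q - p"] unfolding t_def by linarith+
    have tb: "norm (monomial4 c (q - p) x) \<le> (t / \<delta>)\<^sup>2 * g x" if x: "x \<in> R" for x
    proof -
      obtain i j k l where x': "x = (i,j,k,l)" by (cases x) auto
      have "norm (monomial4 c (q - p) x) = \<bar>c x\<bar> * \<bar>Re (fst (q - p))\<bar> ^ i * \<bar>Im (fst (q - p))\<bar> ^ j
                 * \<bar>Re (snd (q - p))\<bar> ^ k * \<bar>Im (snd (q - p))\<bar> ^ l"
        unfolding monomial4_def x' by (simp add: abs_mult power_abs)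
      also have "\<dots> \<le> \<bar>c x\<bar> * t ^ i * t ^ j * t ^ k * t ^ l"
        using coord by (intro mult_mono power_mono mult_nonneg_nonneg zero_le_power) auto
      also have "\<dots> = \<bar>c x\<bar> * \<delta> ^ deg4 x * (t / \<delta>) ^ deg4 x"
        unfolding deg4_def x' using d0 by (simp add: power_add power_divide mult_ac)
      also have "\<dots> \<le> \<bar>c x\<bar> * \<delta> ^ deg4 x * (t / \<delta>)\<^sup>2"
        using d0 t by (intro mult_left_mono power_decreasing[OF degR[OF x]]) auto
      finally show ?thesis unfolding g_def by (simp add: mult_ac)
    qed
    have "norm (infsum (monomial4 c (q - p)) R) \<le> (t / \<delta>)\<^sup>2 * G"
      unfolding G_def
      by (rule norm_infsum_le[OF has_sum_infsum[OF sR] has_sum_cmult_right[OF has_sum_infsum[OF gR]]])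
        (use tb in auto)
    then show ?thesis using split unfolding t_def by (simp add: power_divide mult.commute)
  qed
  have "\<rho> p = c (0,0,0,0)" using rem[of p] d0 by (simp add: linear_simps(3)[OF bl])
  then show thesis using that[OF bl d0, of "G / \<delta>\<^sup>2"] rem by simp
qed

lemma real_analytic_on_differentiable:
  assumes "real_analytic_on U \<rho>" "p \<in> U"
  shows "\<rho> differentiable (at p)"
  using real_analytic_on_quadratic_remainder[OF assms] has_derivative_of_quadratic_remainder
  unfolding differentiable_def by metis

section \<open>Admissible coordinates and transition maps\<close>

lemma mem_ball_origin: "(q::complex \<times> complex) \<in> ball (0,0) r \<longleftrightarrow> norm q < r"
  by (simp add: zero_prod_def[symmetric])

lemma has_derivative_locally_zero:
  fixes f :: "'a::real_normed_vector \<Rightarrow> 'b::real_normed_vector"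
  assumes "(f has_derivative D) (at x)" "open S" "x \<in> S" "\<And>y. y \<in> S \<Longrightarrow> f y = 0"
  shows "D = (\<lambda>_. 0)"
proof -
  have "((\<lambda>_. 0) has_derivative D) (at x)"
    by (rule has_derivative_transform_within_open[OF assms(1,2,3)]) (use assms(4) in auto)
  then show ?thesis using has_derivative_unique has_derivative_const by blast
qed

lemma has_derivative_locally_id:
  fixes f :: "'a::real_normed_vector \<Rightarrow> 'a"
  assumes "(f has_derivative D) (at x)" "open S" "x \<in> S" "\<And>y. y \<in> S \<Longrightarrow> f y = y"
  shows "D = (\<lambda>v. v)"
proof -
  have "((\<lambda>y. y) has_derivative D) (at x)"
    by (rule has_derivative_transform_within_open[OF assms(1,2,3)]) (use assms(4) in auto)
  then show ?thesis using has_derivative_unique has_derivative_ident by blast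
qed

lemma has_derivative_zero_along_curve:
  assumes \<gamma>: "(\<gamma> has_derivative (\<lambda>t. t *\<^sub>R v)) (at 0)"
    and f: "(f has_derivative l) (at (\<gamma> 0))"
    and S: "open S" "0 \<in> S" "\<And>t. t \<in> S \<Longrightarrow> f (\<gamma> t) = (0::real)"
  shows "l v = 0"
proof -
  have "((f \<circ> \<gamma>) has_derivative (l \<circ> (\<lambda>t. t *\<^sub>R v))) (at 0)"
    by (rule diff_chain_at[OF \<gamma> f])
  then have "l \<circ> (\<lambda>t. t *\<^sub>R v) = (\<lambda>_. 0)"
    by (rule has_derivative_locally_zero[OF _ S(1,2)]) (use S(3) in simp)
  then show ?thesis by (metis comp_apply scale_one)
qed

lemma coord_chart_origin:
  assumes "coord_chart U \<Phi>"
  shows "(0,0) \<in> U" "\<Phi> (0,0) = (0,0)" "(0,0) \<in> \<Phi> ` U" "inv_into U \<Phi> (0,0) = (0,0)"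
proof -
  show U: "(0,0) \<in> U" "\<Phi> (0,0) = (0,0)" using assms unfolding coord_chart_def by auto
  then show "(0,0) \<in> \<Phi> ` U" by (metis image_eqI)
  show "inv_into U \<Phi> (0,0) = (0,0)"
    using U assms inv_into_f_f unfolding coord_chart_def by metis
qed

lemma coord_chart_inv_continuous_on:
  assumes "coord_chart U \<Phi>"
  shows "continuous_on (\<Phi> ` U) (inv_into U \<Phi>)"
proof -
  have "continuous_on (\<Phi> ` U) (\<lambda>q. fst (inv_into U \<Phi> q))" "continuous_on (\<Phi> ` U) (\<lambda>q. snd (inv_into U \<Phi> q))"
    using assms holo2_imp_continuous_on unfolding coord_chart_def o_def by blast+
  then show ?thesis using continuous_on_Pair by fastforce
qed

lemma coord_chart_ball_preimage:
  assumes C: "coord_chart U \<Phi>" and A: "open A" "(0,0) \<in> A"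
  obtains e where "e > 0" "ball (0,0) e \<subseteq> \<Phi> ` U" "\<And>q. q \<in> ball (0,0) e \<Longrightarrow> inv_into U \<Phi> q \<in> A"
proof -
  have "open (\<Phi> ` U \<inter> inv_into U \<Phi> -` A)"
    using continuous_open_preimage[OF coord_chart_inv_continuous_on[OF C] _ A(1)] C
    unfolding coord_chart_def by blast
  moreover have "(0,0) \<in> \<Phi> ` U \<inter> inv_into U \<Phi> -` A"
    using C A unfolding coord_chart_def by (metis IntI image_eqI inv_into_f_f vimageI)
  ultimately obtain e where "e > 0" "ball (0,0) e \<subseteq> \<Phi> ` U \<inter> inv_into U \<Phi> -` A"
    using open_contains_ball by blast
  then show thesis using that by blast
qed

lemma coord_chart_has_derivative:
  assumes "coord_chart U \<Phi>" "p \<in> U"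
  obtains L where "(\<Phi> has_derivative L) (at p)"
  using holo2_Pair_has_derivative[of U \<Phi> p] assms unfolding coord_chart_def o_def by metis

lemma coord_chart_inv_has_derivative:
  assumes "coord_chart U \<Phi>" "q \<in> \<Phi> ` U"
  obtains L where "(inv_into U \<Phi> has_derivative L) (at q)"
  using holo2_Pair_has_derivative[of "\<Phi> ` U" "inv_into U \<Phi>" q] assms unfolding coord_chart_def o_def by metis

lemma holo2_vanishing_on_axis_derivative:
  assumes h: "holo2 (ball (0,0) \<rho>0) h" and \<rho>0: "\<rho>0 > 0"
    and axis: "\<And>z. (z, 0::complex) \<in> ball (0,0) \<rho>0 \<Longrightarrow> h (z,0) = 0"
  obtains c where "(h has_derivative (\<lambda>v. snd v * c)) (at (0,0))"
proof -
  have "(0,0) \<in> ball (0,0) \<rho>0" using \<rho>0 by simp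
  then obtain L where L: "(h has_derivative L) (at (0,0))" "\<And>c v. L (cmul2 c v) = c * L v"
    by (rule holo2E[OF h]) blast
  have "((\<lambda>t. (t, 0::complex)) has_derivative (\<lambda>t. (t, 0))) (at 0)"
    by (rule has_derivative_Pair[OF has_derivative_ident has_derivative_const])
  then have "((h \<circ> (\<lambda>t. (t, 0))) has_derivative (L \<circ> (\<lambda>t. (t, 0)))) (at 0)"
    by (rule diff_chain_at) (use L(1) in \<open>simp only: zero_prod_def\<close>)
  then have "L \<circ> (\<lambda>t. (t, 0)) = (\<lambda>_. 0)"
  proof (rule has_derivative_locally_zero[where S="ball 0 \<rho>0"])
    fix t :: complex assume "t \<in> ball 0 \<rho>0"
    then have "(t, 0) \<in> ball (0,0) \<rho>0" by (simp add: dist_Pair_Pair)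
    then show "(h \<circ> (\<lambda>t. (t, 0))) t = 0" using axis by simp
  qed (use \<rho>0 in auto)
  then have "L (1,0) = 0" by (metis comp_apply)
  then have "L v = snd v * L (0,1)" for v
    using complex_linear_Pair_expansion[OF has_derivative_linear[OF L(1)] L(2), of v] by simp
  then have "L = (\<lambda>v. snd v * L (0,1))" by blast
  then show thesis using L(1) that by metis
qed

text \<open>For fixed z, Schwarz's lemma is applied to w \<mapsto> (h(z,w) - c w) / (\<epsilon> s) on the disc of
  radius s.\<close>
lemma holo2_vanishing_on_axis_estimate:
  assumes h: "holo2 (ball (0,0) \<rho>0) h" and \<rho>0: "\<rho>0 > 0"
    and axis: "\<And>z. (z, 0::complex) \<in> ball (0,0) \<rho>0 \<Longrightarrow> h (z,0) = 0"
    and L: "(h has_derivative (\<lambda>v. snd v * c)) (at (0,0))" and \<epsilon>: "\<epsilon> > 0"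
  obtains \<delta> where "\<delta> > 0" "\<And>z w. norm z < \<delta> \<Longrightarrow> norm w < \<delta> \<Longrightarrow> norm (h (z,w) - c * w) \<le> \<epsilon> * norm w"
proof -
  have h0: "h (0,0) = 0" using axis \<rho>0 by simp
  obtain d where d: "d > 0" "\<And>y. norm y < d \<Longrightarrow> norm (h y - snd y * c) \<le> \<epsilon> / 3 * norm y"
  proof -
    have "\<forall>e>0. \<exists>d>0. \<forall>y. norm (y - (0,0)) < d \<longrightarrow> norm (h y - h (0,0) - snd (y - (0,0)) * c) \<le> e * norm (y - (0,0))"
      using L unfolding has_derivative_at_alt by blast
    then obtain d where "d > 0"
      "\<forall>y. norm (y - (0,0)) < d \<longrightarrow> norm (h y - h (0,0) - snd (y - (0,0)) * c) \<le> \<epsilon> / 3 * norm (y - (0,0))"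
      using \<epsilon> by (meson divide_pos_pos zero_less_numeral)
    moreover have "norm (h y - snd y * c) \<le> \<epsilon> / 3 * norm y"
      if "\<forall>y. norm (y - (0,0)) < d \<longrightarrow> norm (h y - h (0,0) - snd (y - (0,0)) * c) \<le> \<epsilon> / 3 * norm (y - (0,0))"
        "norm y < d" for y
      using that h0 by (cases y) (simp add: zero_prod_def[symmetric])
    ultimately show thesis using that by blast
  qed
  define s where "s = min d \<rho>0 / 2"
  have s: "s > 0" "2 * s \<le> d" "2 * s \<le> \<rho>0" unfolding s_def using d \<rho>0 by auto
  have "norm (h (z,w) - c * w) \<le> \<epsilon> * norm w" if zw: "norm z < s" "norm w < s" for z w
  proof -
    define \<phi> where "\<phi> \<xi> = (h (z, of_real s * \<xi>) - c * (of_real s * \<xi>)) / of_real (\<epsilon> * s)" for \<xi>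
    have line: "(z,0) + cmul2 \<xi> (0, of_real s) = (z, of_real s * \<xi>)"
      for \<xi> :: complex by (simp add: cmul2_def mult.commute)
    have near: "norm (z, of_real s * \<xi>) < 2 * s" if "norm \<xi> < 1" for \<xi> :: complex
    proof -
      have "norm (of_real s * \<xi>) = s * norm \<xi>" using s by (simp add: norm_mult)
      also have "\<dots> < s * 1" using that s by (intro mult_strict_left_mono) auto
      finally have "norm (of_real s * \<xi>) < s" by simp
      then show ?thesis using norm_Pair_le[of z "of_real s * \<xi>"] zw by linarith
    qed
    have "(\<lambda>\<xi>. h ((z,0) + cmul2 \<xi> (0, of_real s))) holomorphic_on ball 0 1"
    proof (rule holo2_holomorphic_on_line[OF h])
      fix \<xi> :: complex assume "\<xi> \<in> ball 0 1"
      then have "norm (z, of_real s * \<xi>) < \<rho>0" using near[of \<xi>] s by simp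
      then show "(z,0) + cmul2 \<xi> (0, of_real s) \<in> ball (0,0) \<rho>0" unfolding line mem_ball_origin .
    qed
    then have hol: "\<phi> holomorphic_on ball 0 1"
      unfolding \<phi>_def line by (intro holomorphic_intros) auto
    have "(z, 0) \<in> ball (0,0) \<rho>0" using near[of 0] s by (simp add: dist_Pair_Pair)
    then have "h (z, 0) = 0" by (rule axis)
    then have "\<phi> 0 = 0" unfolding \<phi>_def by simp
    moreover have "norm (\<phi> \<xi>) < 1" if "norm \<xi> < 1" for \<xi>
    proof -
      have "norm (h (z, s * \<xi>) - c * (s * \<xi>)) \<le> \<epsilon> / 3 * norm (z, of_real s * \<xi>)"
        using d(2)[of "(z, s * \<xi>)"] near[OF that] s by (simp add: mult.commute)
      also have "\<dots> < \<epsilon> * s" using near[OF that] \<epsilon> s by simp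
      finally have "norm (h (z, s * \<xi>) - c * (s * \<xi>)) < \<epsilon> * s" .
      then show ?thesis unfolding \<phi>_def using \<epsilon> s by (simp add: norm_divide norm_mult divide_less_eq)
    qed
    moreover have "norm (w / s) < 1" using zw s by (simp add: norm_divide divide_less_eq)
    ultimately have "norm (\<phi> (w / s)) \<le> norm (w / s)" using Schwarz_Lemma(1)[OF hol] by blast
    moreover have "\<phi> (w / s) = (h (z, w) - c * w) / of_real (\<epsilon> * s)" unfolding \<phi>_def using s by simp
    ultimately have "norm (h (z, w) - c * w) / (\<epsilon> * s) \<le> norm w / s"
      using s \<epsilon> by (simp add: norm_divide norm_mult)
    then show ?thesis using s \<epsilon> by (simp add: field_simps)
  qed
  then show thesis using that s(1) by blast
qed

lemma linear_vanishing_on_C_times_R: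
  fixes l :: "complex \<times> complex \<Rightarrow> real"
  assumes lin: "linear l" and z: "\<And>z. l (z,0) = 0" and one: "l (0,1) = 0"
    and ac: "l (a, c) = 0" and c: "Im c \<noteq> 0"
  shows "l v = 0"
proof -
  have decomp: "l (x, y) = l (x, 0) + Re y * l (0,1) + Im y * l (0,\<i>)" for x y
  proof -
    have e: "(x, y) = (x, 0) + Re y *\<^sub>R (0,1) + Im y *\<^sub>R (0,\<i>)" by (simp add: complex_eq_iff)
    have "l (x, y) = l ((x, 0) + Re y *\<^sub>R (0,1) + Im y *\<^sub>R (0,\<i>))" by (rule arg_cong[OF e])
    also have "\<dots> = l (x, 0) + Re y *\<^sub>R l (0,1) + Im y *\<^sub>R l (0,\<i>)"
      by (simp only: linear_add[OF lin] linear_scale[OF lin])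
    finally show ?thesis by simp
  qed
  have "l (0,\<i>) = 0" using decomp[of a c] ac z one c by simp
  then show ?thesis using decomp[of "fst v" "snd v"] z one by simp
qed

lemma admissibleE:
  assumes "admissible M U \<Phi>"
  obtains W where "coord_chart U \<Phi>" "open W" "(0,0) \<in> W" "W \<subseteq> U"
    "\<And>p. p \<in> W \<Longrightarrow> p \<in> complex_locus M \<longleftrightarrow> snd (\<Phi> p) = 0"
    "\<And>p. p \<in> W \<Longrightarrow> fst (\<Phi> p) = 0 \<Longrightarrow> Im (snd (\<Phi> p)) = 0 \<Longrightarrow> p \<in> M"
  using assms unfolding admissible_def by blast

lemma complex_locus_subset: "complex_locus M \<subseteq> M"
  unfolding complex_locus_def by blast

text \<open>The functional l is the differential at the origin of the defining function written in
  the admissible coordinates.\<close>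
lemma admissible_tangent_functional:
  assumes A: "admissible M U \<Phi>" and R: "defining_fn M Ur \<rho>"
  obtains l :: "complex \<times> complex \<Rightarrow> real" where "linear l" "l \<noteq> (\<lambda>v. 0)" "\<And>z. l (z,0) = 0" "l (0,1) = 0"
    "\<And>\<gamma> v S. (\<gamma> has_derivative (\<lambda>t. t *\<^sub>R v)) (at 0) \<Longrightarrow> \<gamma> 0 = (0,0) \<Longrightarrow> open S \<Longrightarrow> 0 \<in> S \<Longrightarrow>
       (\<And>t. t \<in> S \<Longrightarrow> inv_into U \<Phi> (\<gamma> t) \<in> M \<inter> Ur) \<Longrightarrow> l v = 0"
proof -
  obtain W where C: "coord_chart U \<Phi>" and W: "open W" "(0,0) \<in> W" "W \<subseteq> U"
      "\<And>p. p \<in> W \<Longrightarrow> p \<in> complex_locus M \<longleftrightarrow> snd (\<Phi> p) = 0"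
      "\<And>p. p \<in> W \<Longrightarrow> fst (\<Phi> p) = 0 \<Longrightarrow> Im (snd (\<Phi> p)) = 0 \<Longrightarrow> p \<in> M"
    using admissibleE[OF A] by blast
  define G where "G = inv_into U \<Phi>"
  have Ur: "open Ur" "(0,0) \<in> Ur" "\<And>p. p \<in> M \<Longrightarrow> p \<in> Ur \<Longrightarrow> \<rho> p = 0"
    using R unfolding defining_fn_def by auto
  have "real_analytic_on Ur \<rho>" and d\<rho>0: "frechet_derivative \<rho> (at (0,0)) \<noteq> (\<lambda>v. 0)"
    using R unfolding defining_fn_def by auto
  then have d\<rho>: "(\<rho> has_derivative frechet_derivative \<rho> (at (0,0))) (at (0,0))"
    using real_analytic_on_differentiable[OF _ Ur(2)] frechet_derivative_works by blast
  have U: "(0,0) \<in> U" "\<Phi> (0,0) = (0,0)" "(0,0) \<in> \<Phi> ` U" "G (0,0) = (0,0)"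
    using coord_chart_origin[OF C] unfolding G_def by auto
  obtain L0 where L0: "(G has_derivative L0) (at (0,0))"
    using coord_chart_inv_has_derivative[OF C U(3)] unfolding G_def by blast
  obtain LF where LF: "(\<Phi> has_derivative LF) (at (0,0))"
    using coord_chart_has_derivative[OF C U(1)] by blast
  have "L0 \<circ> LF = (\<lambda>v. v)"
  proof (rule has_derivative_locally_id)
    show "((G \<circ> \<Phi>) has_derivative L0 \<circ> LF) (at (0,0))"
      by (rule diff_chain_at[OF LF]) (use L0 U in simp)
    show "(G \<circ> \<Phi>) y = y" if "y \<in> U" for y
      using that C unfolding G_def coord_chart_def by simp
  qed (use C U in \<open>auto simp: coord_chart_def\<close>)
  define l where "l = frechet_derivative \<rho> (at (0,0)) \<circ> L0"
  have dl: "((\<rho> \<circ> G) has_derivative l) (at (0,0))"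
    unfolding l_def by (rule diff_chain_at[OF L0]) (use d\<rho> U in simp)
  have curve: "l v = 0" if "(\<gamma> has_derivative (\<lambda>t. t *\<^sub>R v)) (at 0)" "\<gamma> 0 = (0,0)" "open S" "0 \<in> S"
      "\<And>t. t \<in> S \<Longrightarrow> G (\<gamma> t) \<in> M \<inter> Ur" for \<gamma> v S
    by (rule has_derivative_zero_along_curve[where f="\<rho> \<circ> G", OF that(1) _ that(3,4)])
      (use that dl Ur in auto)
  have "(0,0) \<in> W \<inter> Ur" using W(2) Ur(2) by blast
  then obtain e where e: "e > 0" "ball (0,0) e \<subseteq> \<Phi> ` U" "\<And>q. q \<in> ball (0,0) e \<Longrightarrow> G q \<in> W \<inter> Ur"
    unfolding G_def by (rule coord_chart_ball_preimage[OF C open_Int[OF W(1) Ur(1)]]) auto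
  have inv: "\<Phi> (G q) = q" if "q \<in> ball (0,0) e" for q
    unfolding G_def by (rule f_inv_into_f) (use e(2) that in blast)
  have curve_near: "l v = 0"
    if \<gamma>: "(\<gamma> has_derivative (\<lambda>t. t *\<^sub>R v)) (at 0)" "continuous_on UNIV \<gamma>" "\<gamma> 0 = (0,0)"
      and inM: "\<And>t. \<gamma> t \<in> ball (0,0) e \<Longrightarrow> G (\<gamma> t) \<in> M" for \<gamma> v
  proof (rule curve[OF \<gamma>(1,3)])
    show "open (\<gamma> -` ball (0,0) e)" by (rule open_vimage[OF open_ball \<gamma>(2)])
    show "0 \<in> \<gamma> -` ball (0,0) e" using \<gamma>(3) e(1) by simp
    show "G (\<gamma> t) \<in> M \<inter> Ur" if "t \<in> \<gamma> -` ball (0,0) e" for t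
      using that e(3) inM by blast
  qed
  have axis: "l (z,0) = 0" for z
  proof (rule curve_near)
    show "((\<lambda>t. (complex_of_real t * z, 0::complex)) has_derivative (\<lambda>t. t *\<^sub>R (z, 0))) (at 0)"
      by (auto intro!: derivative_eq_intros simp: scaleR_conv_of_real)
    show "continuous_on UNIV (\<lambda>t. (complex_of_real t * z, 0::complex))" by (intro continuous_intros)
    fix t :: real assume t: "(of_real t * z, 0::complex) \<in> ball (0,0) e"
    have "snd (\<Phi> (G (of_real t * z, 0))) = 0" using inv[OF t] by simp
    then have "G (of_real t * z, 0) \<in> complex_locus M" using W(4)[OF e(3)[OF t, THEN IntD1]] by simp
    then show "G (of_real t * z, 0) \<in> M" using complex_locus_subset by blast
  qed simp
  moreover have one: "l (0,1) = 0"
  proof (rule curve_near)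
    show "((\<lambda>t. (0::complex, complex_of_real t)) has_derivative (\<lambda>t. t *\<^sub>R (0, 1))) (at 0)"
      by (auto intro!: derivative_eq_intros simp: scaleR_conv_of_real)
    show "continuous_on UNIV (\<lambda>t. (0::complex, complex_of_real t))" by (intro continuous_intros)
    fix t :: real assume t: "(0::complex, complex_of_real t) \<in> ball (0,0) e"
    show "G (0, complex_of_real t) \<in> M" using W(5) e(3)[OF t] inv[OF t] by simp
  qed simp
  moreover have nz: "l \<noteq> (\<lambda>v. 0)"
  proof
    assume "l = (\<lambda>v. 0)"
    then have "frechet_derivative \<rho> (at (0,0)) v = 0" for v
      using \<open>L0 \<circ> LF = (\<lambda>v. v)\<close> unfolding l_def by (metis comp_apply)
    then show False using d\<rho>0 by blast
  qed
  moreover have lin: "linear l"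
    unfolding l_def using has_derivative_linear[OF L0] has_derivative_linear[OF d\<rho>]
    by (rule linear_compose)
  show thesis
    by (rule that[OF lin nz axis one curve[unfolded G_def]])
qed

lemma coord_chart_continuous_on:
  assumes "coord_chart U \<Phi>"
  shows "continuous_on U \<Phi>"
proof -
  have "continuous_on U (\<lambda>q. fst (\<Phi> q))" "continuous_on U (\<lambda>q. snd (\<Phi> q))"
    using assms holo2_imp_continuous_on unfolding coord_chart_def o_def by blast+
  then show ?thesis using continuous_on_Pair by fastforce
qed

lemma transition_derivative_right_inverse:
  assumes C0: "coord_chart U0 \<Phi>0" and C: "coord_chart U \<Phi>" and \<rho>0: "\<rho>0 > 0"
    and LH: "(H has_derivative LH) (at (0,0))"
    and H: "\<And>q. q \<in> ball (0,0) \<rho>0 \<Longrightarrow> H q = \<Phi>0 (inv_into U \<Phi> q)"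
  obtains K where "\<And>v. LH (K v) = v"
proof -
  define G0 where "G0 = inv_into U0 \<Phi>0"
  note O = coord_chart_origin[OF C] and O0 = coord_chart_origin[OF C0]
  have "open (U \<inter> \<Phi> -` ball (0,0) \<rho>0)"
    using continuous_open_preimage[OF coord_chart_continuous_on[OF C]] C unfolding coord_chart_def by blast
  moreover have "(0,0) \<in> U \<inter> \<Phi> -` ball (0,0) \<rho>0" using O \<rho>0 by simp
  ultimately obtain e where e: "e > 0" "ball (0,0) e \<subseteq> \<Phi>0 ` U0"
    "\<And>y. y \<in> ball (0,0) e \<Longrightarrow> G0 y \<in> U \<inter> \<Phi> -` ball (0,0) \<rho>0"
    unfolding G0_def by (rule coord_chart_ball_preimage[OF C0]) auto
  have id: "(H \<circ> (\<Phi> \<circ> G0)) y = y" if "y \<in> ball (0,0) e" for y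
  proof -
    have "G0 y \<in> U" "\<Phi> (G0 y) \<in> ball (0,0) \<rho>0" using e(3)[OF that] by auto
    then have "H (\<Phi> (G0 y)) = \<Phi>0 (G0 y)" using H C unfolding coord_chart_def by simp
    also have "\<dots> = y" unfolding G0_def by (rule f_inv_into_f) (use e(2) that in blast)
    finally show ?thesis by simp
  qed
  obtain L0 where L0: "(G0 has_derivative L0) (at (0,0))"
    unfolding G0_def by (rule coord_chart_inv_has_derivative[OF C0 O0(3)])
  obtain LF where LF: "(\<Phi> has_derivative LF) (at (0,0))"
    by (rule coord_chart_has_derivative[OF C O(1)])
  have "((\<Phi> \<circ> G0) has_derivative LF \<circ> L0) (at (0,0))"
    by (rule diff_chain_at[OF L0]) (use LF O0 in \<open>simp add: G0_def\<close>)
  then have "((H \<circ> (\<Phi> \<circ> G0)) has_derivative LH \<circ> (LF \<circ> L0)) (at (0,0))"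
    by (rule diff_chain_at) (use LH O O0 in \<open>simp add: G0_def\<close>)
  moreover have "(0::complex, 0::complex) \<in> ball (0,0) e" using e(1) by simp
  ultimately have "LH \<circ> (LF \<circ> L0) = (\<lambda>v. v)"
    using has_derivative_locally_id[OF _ open_ball _ id] by blast
  then show thesis using that[of "LF \<circ> L0"] by (metis comp_apply)
qed

text \<open>The curve t \<mapsto> H(0,t) lies in M, so its velocity (_, c) is killed by the tangent functional,
  whose kernel is C \<times> R.\<close>
lemma admissible_transition_coefficient_real:
  fixes H :: "complex \<times> complex \<Rightarrow> complex \<times> complex"
  assumes A0: "admissible M U0 \<Phi>0" and R: "defining_fn M Ur \<rho>" and \<rho>0: "\<rho>0 > 0"
    and H: "(H has_derivative (\<lambda>v. (L1 v, snd v * c))) (at (0,0))" "H (0,0) = (0,0)"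
    and in_M: "\<And>t. t \<in> ball 0 \<rho>0 \<Longrightarrow> inv_into U0 \<Phi>0 (H (0, complex_of_real t)) \<in> M \<inter> Ur"
  shows "Im c = 0"
proof (rule ccontr)
  assume Imc: "Im c \<noteq> 0"
  obtain l :: "complex \<times> complex \<Rightarrow> real" where l: "linear l" "l \<noteq> (\<lambda>v. 0)"
    "\<And>z. l (z,0) = 0" "l (0,1) = 0"
    "\<And>\<gamma> v S. (\<gamma> has_derivative (\<lambda>t. t *\<^sub>R v)) (at 0) \<Longrightarrow> \<gamma> 0 = (0,0) \<Longrightarrow> open S \<Longrightarrow> 0 \<in> S \<Longrightarrow>
       (\<And>t. t \<in> S \<Longrightarrow> inv_into U0 \<Phi>0 (\<gamma> t) \<in> M \<inter> Ur) \<Longrightarrow> l v = 0"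
    by (rule admissible_tangent_functional[OF A0 R]) blast
  define LH where "LH = (\<lambda>v. (L1 v, snd v * c))"
  have LH: "(H has_derivative LH) (at (0,0))" using H(1) unfolding LH_def .
  have "l (LH (0,1)) = 0"
  proof (rule l(5)[where S="ball 0 \<rho>0"])
    have "((\<lambda>t. (0::complex, complex_of_real t)) has_derivative (\<lambda>t. t *\<^sub>R (0, 1))) (at 0)"
      by (auto intro!: derivative_eq_intros simp: scaleR_conv_of_real)
    then have "((H \<circ> (\<lambda>t. (0, complex_of_real t))) has_derivative (LH \<circ> (\<lambda>t. t *\<^sub>R (0, 1)))) (at 0)"
      by (rule diff_chain_at) (use LH in simp)
    moreover have "LH \<circ> (\<lambda>t. t *\<^sub>R (0, 1)) = (\<lambda>t. t *\<^sub>R LH (0, 1))"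
      by (rule ext) (simp only: comp_apply linear_scale[OF has_derivative_linear[OF LH]])
    ultimately show "((\<lambda>t. H (0, complex_of_real t)) has_derivative (\<lambda>t. t *\<^sub>R LH (0,1))) (at 0)"
      by (simp add: o_def)
  qed (use H(2) \<rho>0 in_M in auto)
  then have "l (L1 (0,1), c) = 0" unfolding LH_def by simp
  then have "l v = 0" for v by (rule linear_vanishing_on_C_times_R[OF l(1,3,4) _ Imc])
  then show False using l(2) by blast
qed

lemma admissible_transition_map:
  assumes A0: "admissible M U0 \<Phi>0" and A: "admissible M U \<Phi>" and R: "defining_fn M Ur \<rho>"
  obtains \<rho>0 c where "\<rho>0 > 0" "ball (0,0) \<rho>0 \<subseteq> \<Phi> ` U" "\<And>q. q \<in> ball (0,0) \<rho>0 \<Longrightarrow> inv_into U \<Phi> q \<in> U0"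
    "holo2 (ball (0,0) \<rho>0) (\<lambda>q. fst (\<Phi>0 (inv_into U \<Phi> q)))"
    "holo2 (ball (0,0) \<rho>0) (\<lambda>q. snd (\<Phi>0 (inv_into U \<Phi> q)))"
    "\<Phi>0 (inv_into U \<Phi> (0,0)) = (0,0)"
    "\<And>z. (z, 0::complex) \<in> ball (0,0) \<rho>0 \<Longrightarrow> snd (\<Phi>0 (inv_into U \<Phi> (z,0))) = 0"
    "((\<lambda>q. snd (\<Phi>0 (inv_into U \<Phi> q))) has_derivative (\<lambda>v. snd v * c)) (at (0,0))"
    "Im c = 0" "c \<noteq> 0"
proof -
  obtain W0 where C0: "coord_chart U0 \<Phi>0" and W0: "open W0" "(0,0) \<in> W0" "W0 \<subseteq> U0"
      "\<And>p. p \<in> W0 \<Longrightarrow> p \<in> complex_locus M \<longleftrightarrow> snd (\<Phi>0 p) = 0"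
    using admissibleE[OF A0] by metis
  obtain W where C: "coord_chart U \<Phi>" and W: "open W" "(0,0) \<in> W"
      "\<And>p. p \<in> W \<Longrightarrow> p \<in> complex_locus M \<longleftrightarrow> snd (\<Phi> p) = 0"
      "\<And>p. p \<in> W \<Longrightarrow> fst (\<Phi> p) = 0 \<Longrightarrow> Im (snd (\<Phi> p)) = 0 \<Longrightarrow> p \<in> M"
    using admissibleE[OF A] by metis
  have Ur: "open Ur" "(0,0) \<in> Ur" "\<And>p. p \<in> M \<Longrightarrow> p \<in> Ur \<Longrightarrow> \<rho> p = 0"
    using R unfolding defining_fn_def by auto
  define G where "G = inv_into U \<Phi>"
  define h1 where "h1 q = fst (\<Phi>0 (G q))" for q
  define h2 where "h2 q = snd (\<Phi>0 (G q))" for q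
  have "(0,0) \<in> W \<inter> W0 \<inter> Ur" using W(2) W0(2) Ur(2) by blast
  then obtain \<rho>0 where \<rho>0: "\<rho>0 > 0" "ball (0,0) \<rho>0 \<subseteq> \<Phi> ` U"
      "\<And>q. q \<in> ball (0,0) \<rho>0 \<Longrightarrow> G q \<in> W \<inter> W0 \<inter> Ur"
    unfolding G_def by (rule coord_chart_ball_preimage[OF C open_Int[OF open_Int[OF W(1) W0(1)] Ur(1)]]) auto
  define B where "B = ball (0::complex, 0::complex) \<rho>0"
  have B: "\<Phi> (G q) = q" "G q \<in> W" "G q \<in> W0" "G q \<in> Ur" "G q \<in> U0" if "q \<in> B" for q
  proof -
    show "\<Phi> (G q) = q" unfolding G_def by (rule f_inv_into_f) (use that \<rho>0(2) B_def in blast)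
    show "G q \<in> W" "G q \<in> W0" "G q \<in> Ur" using that \<rho>0(3) unfolding B_def by auto
    then show "G q \<in> U0" using W0(3) by blast
  qed
  have holG: "holo2 B (\<lambda>q. fst (G q))" "holo2 B (\<lambda>q. snd (G q))"
    using C \<rho>0(2) unfolding coord_chart_def o_def G_def B_def by (auto intro: holo2_subset)
  have hol\<Phi>0: "holo2 U0 (\<lambda>p. fst (\<Phi>0 p))" "holo2 U0 (\<lambda>p. snd (\<Phi>0 p))"
    using C0 unfolding coord_chart_def o_def by auto
  have "holo2 B (\<lambda>q. fst (\<Phi>0 (fst (G q), snd (G q))))" "holo2 B (\<lambda>q. snd (\<Phi>0 (fst (G q), snd (G q))))"
    by (rule holo2_compose[OF hol\<Phi>0(1) holG] holo2_compose[OF hol\<Phi>0(2) holG]; use B(5) in simp)+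
  then have hol: "holo2 B h1" "holo2 B h2" unfolding h1_def h2_def by simp_all
  have H00: "\<Phi>0 (G (0,0)) = (0,0)"
    using coord_chart_origin[OF C] coord_chart_origin[OF C0] unfolding G_def by simp
  have axis: "h2 (z,0) = 0" if "(z,0) \<in> B" for z
  proof -
    have "G (z,0) \<in> complex_locus M" using W(3)[OF B(2)[OF that]] B(1)[OF that] by simp
    then show ?thesis unfolding h2_def using W0(4)[OF B(3)[OF that]] by simp
  qed
  obtain c where c: "(h2 has_derivative (\<lambda>v. snd v * c)) (at (0,0))"
    by (rule holo2_vanishing_on_axis_derivative[OF hol(2)[unfolded B_def] \<rho>0(1) axis[unfolded B_def]])
  obtain L1 where L1: "(h1 has_derivative L1) (at (0,0))"
    using holo2E[OF hol(1)] \<rho>0(1) unfolding B_def by (metis centre_in_ball)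
  define LH where "LH v = (L1 v, snd v * c)" for v
  have LH: "((\<lambda>q. \<Phi>0 (G q)) has_derivative LH) (at (0,0))"
    using has_derivative_Pair[OF L1 c] unfolding LH_def h1_def h2_def by simp
  have "Im c = 0"
  proof (rule admissible_transition_coefficient_real[OF A0 R \<rho>0(1) LH[unfolded LH_def] H00])
    fix t :: real assume "t \<in> ball 0 \<rho>0"
    then have q: "(0, complex_of_real t) \<in> B" unfolding B_def by (simp add: dist_Pair_Pair dist_norm)
    have "inv_into U0 \<Phi>0 (\<Phi>0 (G (0, complex_of_real t))) = G (0, complex_of_real t)"
      using C0 B(5)[OF q] unfolding coord_chart_def by simp
    moreover have "G (0, complex_of_real t) \<in> M" using W(4)[OF B(2)[OF q]] B(1)[OF q] by simp
    ultimately show "inv_into U0 \<Phi>0 (\<Phi>0 (G (0, complex_of_real t))) \<in> M \<inter> Ur" using B(4)[OF q] by simp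
  qed
  moreover have "c \<noteq> 0"
  proof
    assume "c = 0"
    obtain K where "\<And>v. LH (K v) = v"
      by (rule transition_derivative_right_inverse[OF C0 C \<rho>0(1) LH]) (auto simp: G_def)
    from this[of "(0,1)"] show False using \<open>c = 0\<close> unfolding LH_def by simp
  qed
  ultimately show thesis
    using \<rho>0(1,2) B(5) hol H00 axis c unfolding B_def G_def h1_def h2_def by (intro that[of \<rho>0 c])
qed

section \<open>Sectors\<close>

lemma sector_mult_near_one:
  assumes "0 < \<alpha>" "\<alpha> < pi / 2"
  obtains e where "e > 0"
    "\<And>w u. w \<noteq> 0 \<Longrightarrow> \<bar>Arg w\<bar> < \<alpha> / 2 \<Longrightarrow> norm (u - 1) < e \<Longrightarrow> w * u \<noteq> 0 \<and> \<bar>Arg (w * u)\<bar> < \<alpha>"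
proof -
  have "isCont Arg 1" by (rule continuous_at_Arg) (auto simp: nonpos_Reals_def)
  then obtain d where d: "d > 0" "\<And>u. dist u 1 < d \<Longrightarrow> dist (Arg u) (Arg 1) < \<alpha> / 2"
    unfolding continuous_at_eps_delta using assms by (metis half_gt_zero)
  have "w * u \<noteq> 0 \<and> \<bar>Arg (w * u)\<bar> < \<alpha>"
    if w: "w \<noteq> 0" "\<bar>Arg w\<bar> < \<alpha> / 2" and u: "norm (u - 1) < min d 1" for w u :: complex
  proof -
    have u0: "u \<noteq> 0" using u by auto
    have au: "\<bar>Arg u\<bar> < \<alpha> / 2" using d(2)[of u] u by (simp add: dist_norm)
    have "Arg (w * u) = Arg w + Arg u"
      by (rule Arg_times) (use w u0 au assms in auto)
    then show ?thesis using w u0 au by simp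
  qed
  then show thesis using that[of "min d 1"] d(1) by simp
qed

lemma Sminus_iff_uminus_Splus: "w \<in> Sminus R \<alpha> \<longleftrightarrow> - w \<in> Splus R \<alpha>"
  unfolding Splus_def Sminus_def by simp

lemma of_real_mult_Splus:
  assumes e: "\<And>w u. w \<noteq> 0 \<Longrightarrow> \<bar>Arg w\<bar> < \<alpha> / 2 \<Longrightarrow> norm (u - 1) < e \<Longrightarrow> w * u \<noteq> 0 \<and> \<bar>Arg (w * u)\<bar> < \<alpha>"
    and w: "w \<in> Splus m (\<alpha> / 2)" and u: "norm (u - 1) < e" and x: "x > 0"
    and R: "norm (of_real x * w * u) < R"
  shows "of_real x * w * u \<in> Splus R \<alpha>"
proof -
  have "w * u \<noteq> 0" "\<bar>Arg (w * u)\<bar> < \<alpha>" using e[OF _ _ u] w unfolding Splus_def by auto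
  moreover have "Arg (of_real x * (w * u)) = Arg (w * u)" by (rule Arg_times_of_real[OF x])
  ultimately show ?thesis using R x unfolding Splus_def by (simp add: mult.assoc)
qed

lemma real_mult_sectors:
  assumes c: "Im c = 0" "c \<noteq> 0"
    and e: "\<And>w u. w \<noteq> 0 \<Longrightarrow> \<bar>Arg w\<bar> < \<alpha> / 2 \<Longrightarrow> norm (u - 1) < e \<Longrightarrow> w * u \<noteq> 0 \<and> \<bar>Arg (w * u)\<bar> < \<alpha>"
    and u: "norm (u - 1) < e" and R: "norm (c * w * u) < R"
  shows "w \<in> Splus m (\<alpha> / 2) \<Longrightarrow> c * w * u \<in> (if Re c > 0 then Splus R \<alpha> else Sminus R \<alpha>)"
    and "w \<in> Sminus m (\<alpha> / 2) \<Longrightarrow> c * w * u \<in> (if Re c > 0 then Sminus R \<alpha> else Splus R \<alpha>)"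
proof -
  obtain x where cx: "c = of_real x" using c(1) by (intro that[of "Re c"]) (simp add: complex_eq_iff)
  have x: "x \<noteq> 0" using c(2) cx by simp
  have sp: "of_real y * v * u \<in> Splus R \<alpha>"
    if "v \<in> Splus m (\<alpha> / 2)" "y > 0" "norm (of_real y * v * u) < R" for y v
    by (rule of_real_mult_Splus[OF _ that(1) u that(2,3)]) (fact e)
  have nR: "norm (of_real \<bar>x\<bar> * v * u) < R" if "norm v = norm w" for v
    using R that unfolding cx by (simp add: norm_mult)
  show "c * w * u \<in> (if Re c > 0 then Splus R \<alpha> else Sminus R \<alpha>)" if w: "w \<in> Splus m (\<alpha> / 2)"
  proof (cases "x > 0")
    case True
    then show ?thesis using sp[OF w True] R unfolding cx by simp
  next
    case False
    then have "of_real \<bar>x\<bar> * w * u \<in> Splus R \<alpha>" using sp[OF w _ nR] x by simp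
    then show ?thesis using False x unfolding cx by (simp add: Sminus_iff_uminus_Splus)
  qed
  show "c * w * u \<in> (if Re c > 0 then Sminus R \<alpha> else Splus R \<alpha>)" if w: "w \<in> Sminus m (\<alpha> / 2)"
  proof -
    have "of_real \<bar>x\<bar> * - w * u \<in> Splus R \<alpha>"
      using sp[OF w[unfolded Sminus_iff_uminus_Splus] _ nR] x by simp
    then show ?thesis using x unfolding cx by (cases "x > 0") (simp_all add: Sminus_iff_uminus_Splus abs_if)
  qed
qed

lemma Dplus_Dminus_subset_std_sect: "Dplus r R \<alpha> \<union> Dminus r R \<alpha> \<subseteq> std_sect r R \<alpha>"
  unfolding Dplus_def Dminus_def std_sect_def by auto

lemma near_linear_factor:
  fixes c w h :: complex
  assumes "norm (h - c * w) \<le> \<epsilon> * norm w" "\<epsilon> < norm c * e" "c \<noteq> 0" "e > 0"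
  obtains u where "h = c * w * u" "norm (u - 1) < e"
proof (cases "w = 0")
  case True
  then show thesis using assms that[of 1] by simp
next
  case False
  define u where "u = h / (c * w)"
  have cw: "c * w \<noteq> 0" using False assms(3) by simp
  have "u - 1 = (h - c * w) / (c * w)" unfolding u_def using cw by (simp add: field_simps)
  then have "norm (u - 1) = norm (h - c * w) / (norm c * norm w)" by (simp add: norm_divide norm_mult)
  also have "\<dots> \<le> \<epsilon> / norm c" using assms(1,3) False by (simp add: divide_simps mult.commute)
  also have "\<dots> < e" using assms(2,3) by (simp add: divide_less_eq mult.commute)
  finally show thesis using that[of u] cw unfolding u_def by simp
qed

lemma transition_sector_radius:
  fixes h1 h2 :: "complex \<times> complex \<Rightarrow> complex"
  assumes r: "r > 0" and R: "R > 0" and \<rho>0: "\<rho>0 > 0" and c: "c \<noteq> 0" and e: "e > 0"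
    and h1: "isCont h1 (0,0)" "h1 (0,0) = 0"
    and est: "\<And>\<epsilon>. \<epsilon> > 0 \<Longrightarrow> \<exists>\<delta>>0. \<forall>z w. norm z < \<delta> \<and> norm w < \<delta> \<longrightarrow> norm (h2 (z,w) - c * w) \<le> \<epsilon> * norm w"
  obtains m where "m > 0" "\<And>z w. norm z < m \<Longrightarrow> norm w < m \<Longrightarrow> (z,w) \<in> ball (0,0) \<rho>0 \<and>
      norm (h1 (z,w)) < r \<and> norm (h2 (z,w)) < R \<and> (\<exists>u. h2 (z,w) = c * w * u \<and> norm (u - 1) < e)"
proof -
  have nc: "norm c > 0" using c by simp
  define \<epsilon> where "\<epsilon> = norm c * min e 1 / 2"
  have \<epsilon>: "\<epsilon> > 0" "\<epsilon> < norm c * e" "\<epsilon> < norm c" unfolding \<epsilon>_def using nc e by (auto simp: min_def)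
  obtain \<delta> where \<delta>: "\<delta> > 0" "\<And>z w. norm z < \<delta> \<Longrightarrow> norm w < \<delta> \<Longrightarrow> norm (h2 (z,w) - c * w) \<le> \<epsilon> * norm w"
    using est[OF \<epsilon>(1)] by blast
  obtain \<delta>1 where \<delta>1: "\<delta>1 > 0" "\<And>q. dist q (0,0) < \<delta>1 \<Longrightarrow> dist (h1 q) (h1 (0,0)) < r"
    using h1(1) r unfolding continuous_at_eps_delta by blast
  define m where "m = min (min \<delta> \<delta>1) (min \<rho>0 (R / (4 * norm c))) / 2"
  have m: "m > 0" "2 * m \<le> \<delta>" "2 * m \<le> \<delta>1" "2 * m \<le> \<rho>0" "2 * m \<le> R / (4 * norm c)"
    unfolding m_def using \<delta>(1) \<delta>1(1) \<rho>0 R nc by auto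
  have "(z,w) \<in> ball (0,0) \<rho>0 \<and> norm (h1 (z,w)) < r \<and> norm (h2 (z,w)) < R \<and>
      (\<exists>u. h2 (z,w) = c * w * u \<and> norm (u - 1) < e)"
    if zw: "norm z < m" "norm w < m" for z w
  proof (intro conjI)
    have nq: "norm (z,w) < 2 * m" using norm_Pair_le[of z w] zw by simp
    then show "norm (h1 (z,w)) < r"
      using \<delta>1(2)[of "(z,w)"] m(3) h1(2) by (simp add: dist_norm zero_prod_def[symmetric])
    show "(z,w) \<in> ball (0,0) \<rho>0" unfolding mem_ball_origin using nq m(4) by simp
    have est_zw: "norm (h2 (z,w) - c * w) \<le> \<epsilon> * norm w" using \<delta>(2) zw m(1,2) by simp
    have "norm (h2 (z,w)) \<le> norm (c * w) + \<epsilon> * norm w"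
      using est_zw norm_triangle_ineq[of "h2 (z,w) - c * w" "c * w"] by simp
    also have "\<dots> \<le> 2 * norm c * m"
    proof -
      have "\<epsilon> * norm w \<le> norm c * norm w" using \<epsilon>(3) by (intro mult_right_mono) auto
      moreover have "norm c * norm w \<le> norm c * m" using zw by (intro mult_left_mono) auto
      ultimately show ?thesis by (simp add: norm_mult)
    qed
    also have "\<dots> < R" using m(5) nc R by (simp add: field_simps)
    finally show "norm (h2 (z,w)) < R" .
    show "\<exists>u. h2 (z,w) = c * w * u \<and> norm (u - 1) < e"
      using near_linear_factor[OF est_zw \<epsilon>(2) c e] by metis
  qed
  then show thesis using that m(1) by blast
qed

lemma std_sect_image:
  fixes h1 h2 :: "complex \<times> complex \<Rightarrow> complex"
  assumes c: "Im c = 0" "c \<noteq> 0" and m: "m > 0"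
    and e: "\<And>w u. w \<noteq> 0 \<Longrightarrow> \<bar>Arg w\<bar> < \<alpha> / 2 \<Longrightarrow> norm (u - 1) < e \<Longrightarrow> w * u \<noteq> 0 \<and> \<bar>Arg (w * u)\<bar> < \<alpha>"
    and near: "\<And>z w. norm z < m \<Longrightarrow> norm w < m \<Longrightarrow>
      norm (h1 (z,w)) < r \<and> norm (h2 (z,w)) < R \<and> (\<exists>u. h2 (z,w) = c * w * u \<and> norm (u - 1) < e)"
  shows "q \<in> Dplus m m (\<alpha>/2) \<Longrightarrow> (h1 q, h2 q) \<in> (if Re c > 0 then Dplus r R \<alpha> else Dminus r R \<alpha>)"
    and "q \<in> Dminus m m (\<alpha>/2) \<Longrightarrow> (h1 q, h2 q) \<in> (if Re c > 0 then Dminus r R \<alpha> else Dplus r R \<alpha>)"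
    and "q \<in> std_sect m m (\<alpha>/2) \<Longrightarrow> (h1 q, h2 q) \<in> std_sect r R \<alpha>"
proof -
  have factor: "\<exists>u. norm (c * w * u) < R \<and> norm (u - 1) < e \<and> h2 (z,w) = c * w * u \<and> h1 (z,w) \<in> ball 0 r"
    if "norm z < m" "norm w < m" for z w
    using near[OF that] by auto
  have image: "(h1 (z,w), h2 (z,w)) \<in> (if Re c > 0 then Dplus r R \<alpha> else Dminus r R \<alpha>)"
    if z: "norm z < m" and w: "w \<in> Splus m (\<alpha>/2)" for z w
  proof -
    obtain u where u: "norm (c * w * u) < R" "norm (u - 1) < e" "h2 (z,w) = c * w * u" "h1 (z,w) \<in> ball 0 r"
      using factor[OF z] w unfolding Splus_def by blast
    have "c * w * u \<in> (if Re c > 0 then Splus R \<alpha> else Sminus R \<alpha>)"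
      by (rule real_mult_sectors(1)[OF c _ u(2,1) w]) (fact e)
    then show ?thesis using u(3,4) unfolding Dplus_def Dminus_def by auto
  qed
  have image': "(h1 (z,w), h2 (z,w)) \<in> (if Re c > 0 then Dminus r R \<alpha> else Dplus r R \<alpha>)"
    if z: "norm z < m" and w: "w \<in> Sminus m (\<alpha>/2)" for z w
  proof -
    obtain u where u: "norm (c * w * u) < R" "norm (u - 1) < e" "h2 (z,w) = c * w * u" "h1 (z,w) \<in> ball 0 r"
      using factor[OF z] w unfolding Sminus_def by blast
    have "c * w * u \<in> (if Re c > 0 then Sminus R \<alpha> else Splus R \<alpha>)"
      by (rule real_mult_sectors(2)[OF c _ u(2,1) w]) (fact e)
    then show ?thesis using u(3,4) unfolding Dplus_def Dminus_def by auto
  qed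
  show "(h1 q, h2 q) \<in> (if Re c > 0 then Dplus r R \<alpha> else Dminus r R \<alpha>)" if "q \<in> Dplus m m (\<alpha>/2)"
    using that image unfolding Dplus_def by auto
  show "(h1 q, h2 q) \<in> (if Re c > 0 then Dminus r R \<alpha> else Dplus r R \<alpha>)" if "q \<in> Dminus m m (\<alpha>/2)"
    using that image' unfolding Dminus_def by auto
  show "(h1 q, h2 q) \<in> std_sect r R \<alpha>" if q: "q \<in> std_sect m m (\<alpha>/2)"
  proof -
    obtain z w where q: "q = (z,w)" "norm z < m" "w \<in> Splus m (\<alpha>/2) \<or> w = 0 \<or> w \<in> Sminus m (\<alpha>/2)"
      using q unfolding std_sect_def by auto
    have sub: "Dplus r R \<alpha> \<union> Dminus r R \<alpha> \<subseteq> std_sect r R \<alpha>" by (rule Dplus_Dminus_subset_std_sect)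
    from q(3) consider (plus) "w \<in> Splus m (\<alpha>/2)" | (axis) "w = 0" | (minus) "w \<in> Sminus m (\<alpha>/2)"
      by blast
    then show ?thesis
    proof cases
      case plus
      then show ?thesis using image[OF q(2) plus] sub q(1) by (auto split: if_splits)
    next
      case axis
      then show ?thesis using near[OF q(2), of 0] m q(1) unfolding std_sect_def by auto
    next
      case minus
      then show ?thesis using image'[OF q(2) minus] sub q(1) by (auto split: if_splits)
    qed
  qed
qed

lemma sector_transfer:
  assumes vp: "valid_params r R \<alpha>" and \<rho>0: "\<rho>0 > 0" and c: "Im c = 0" "c \<noteq> 0"
    and h1: "isCont h1 (0,0)" "h1 (0,0) = 0"
    and est: "\<And>\<epsilon>. \<epsilon> > 0 \<Longrightarrow> \<exists>\<delta>>0. \<forall>z w. norm z < \<delta> \<and> norm w < \<delta> \<longrightarrow> norm (h2 (z,w) - c * w) \<le> \<epsilon> * norm w"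
  obtains m where "valid_params m m (\<alpha>/2)" "std_sect m m (\<alpha>/2) \<subseteq> ball (0,0) \<rho>0"
    "\<And>q. q \<in> std_sect m m (\<alpha>/2) \<Longrightarrow> (h1 q, h2 q) \<in> std_sect r R \<alpha>"
    "\<And>q. q \<in> Dplus m m (\<alpha>/2) \<Longrightarrow> (h1 q, h2 q) \<in> (if Re c > 0 then Dplus r R \<alpha> else Dminus r R \<alpha>)"
    "\<And>q. q \<in> Dminus m m (\<alpha>/2) \<Longrightarrow> (h1 q, h2 q) \<in> (if Re c > 0 then Dminus r R \<alpha> else Dplus r R \<alpha>)"
proof -
  have r: "r > 0" and R: "R > 0" and \<alpha>: "0 < \<alpha>" "\<alpha> < pi / 2" using vp unfolding valid_params_def by auto
  obtain e where e: "e > 0"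
    "\<And>w u. w \<noteq> 0 \<Longrightarrow> \<bar>Arg w\<bar> < \<alpha> / 2 \<Longrightarrow> norm (u - 1) < e \<Longrightarrow> w * u \<noteq> 0 \<and> \<bar>Arg (w * u)\<bar> < \<alpha>"
    by (rule sector_mult_near_one[OF \<alpha>]) blast
  obtain m where m: "m > 0" and near: "\<And>z w. norm z < m \<Longrightarrow> norm w < m \<Longrightarrow> (z,w) \<in> ball (0,0) \<rho>0 \<and>
      norm (h1 (z,w)) < r \<and> norm (h2 (z,w)) < R \<and> (\<exists>u. h2 (z,w) = c * w * u \<and> norm (u - 1) < e)"
    by (rule transition_sector_radius[OF r R \<rho>0 c(2) e(1) h1 est]) blast+
  have near': "norm (h1 (z,w)) < r \<and> norm (h2 (z,w)) < R \<and> (\<exists>u. h2 (z,w) = c * w * u \<and> norm (u - 1) < e)"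
    if "norm z < m" "norm w < m" for z w
    using near[OF that] by blast
  show thesis
  proof (rule that)
    show "valid_params m m (\<alpha>/2)" using m \<alpha> unfolding valid_params_def by simp
    show "std_sect m m (\<alpha>/2) \<subseteq> ball (0,0) \<rho>0"
      using near m unfolding std_sect_def Splus_def Sminus_def by auto
  qed (use std_sect_image[OF c m e(2) near'] in auto)
qed

section \<open>Change of admissible coordinates\<close>

lemma has_derivative_linear_bound:
  fixes f :: "'a::real_normed_vector \<Rightarrow> 'b::real_normed_vector"
  assumes "(f has_derivative L) (at 0)" "f 0 = 0"
  shows "\<exists>K \<delta>. K > 0 \<and> \<delta> > 0 \<and> (\<forall>q. norm q < \<delta> \<longrightarrow> norm (f q) \<le> K * norm q)"
proof -
  have bl: "bounded_linear L" and al: "\<forall>e>0. \<exists>d>0. \<forall>y. norm (y - 0) < d \<longrightarrow> norm (f y - f 0 - L (y - 0)) \<le> e * norm (y - 0)"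
    using assms(1) unfolding has_derivative_at_alt by auto
  obtain B where B: "B > 0" "\<And>x. norm (L x) \<le> norm x * B" using bounded_linear.pos_bounded[OF bl] by blast
  obtain d where d: "d > 0" "\<And>y. norm y < d \<Longrightarrow> norm (f y - L y) \<le> 1 * norm y"
    using al[rule_format, of 1] assms(2) by auto
  have "norm (f q) \<le> (B + 1) * norm q" if q: "norm q < d" for q
  proof -
    have "norm (f q) \<le> norm (f q - L q) + norm (L q)" by (metis norm_triangle_ineq diff_add_cancel)
    also have "\<dots> \<le> norm q + norm q * B" using d(2)[OF q] B(2)[of q] by simp
    finally show ?thesis by (simp add: algebra_simps)
  qed
  then show ?thesis using B d by (intro exI[of _ "B + 1"] exI[of _ d]) auto
qed

lemma holo2_Pair_linear_bound:
  assumes h: "holo2 S h1" "holo2 S h2" and S: "(0,0) \<in> S" and h0: "h1 (0,0) = 0" "h2 (0,0) = 0"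
  obtains K \<delta> where "K > 0" "\<delta> > 0" "\<And>q. norm q < \<delta> \<Longrightarrow> norm (h1 q, h2 q) \<le> K * norm q"
proof -
  obtain L where "((\<lambda>q. (h1 q, h2 q)) has_derivative L) (at (0,0))"
    by (rule holo2_Pair_has_derivative[OF _ _ S]) (use h in auto)
  then show thesis
    using has_derivative_linear_bound[of "\<lambda>q. (h1 q, h2 q)" L] h0 that
    unfolding zero_prod_def by auto
qed

lemma sectorial_pullback:
  assumes g: "holo2 A g" "asymp_rep g a A" "(0,0) \<notin> A"
    and h: "holo2 B h1" "holo2 B h2" and S: "S \<subseteq> B" "\<And>q. q \<in> S \<Longrightarrow> (h1 q, h2 q) \<in> A"
    and K: "K > 0" "\<delta> > 0" "\<And>q. norm q < \<delta> \<Longrightarrow> norm (h1 q, h2 q) \<le> K * norm q"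
    and E: "\<And>N. \<exists>C \<delta>. \<delta> > 0 \<and>
              (\<forall>q. norm q < \<delta> \<longrightarrow> norm (poly2 N a (h1 q, h2 q) - poly2 N a' q) \<le> C * norm q ^ Suc N)"
  shows "holo2 S (\<lambda>q. g (h1 q, h2 q))" "asymp_rep (\<lambda>q. g (h1 q, h2 q)) a' S"
proof -
  show "holo2 S (\<lambda>q. g (h1 q, h2 q))"
    by (rule holo2_compose[OF g(1) holo2_subset[OF h(1) S(1)] holo2_subset[OF h(2) S(1)] S(2)])
  show "asymp_rep (\<lambda>q. g (h1 q, h2 q)) a' S"
    using asymp_rep_compose[OF g(2,3) K(2), of S "\<lambda>q. (h1 q, h2 q)" K a'] S(2) K(1,3) E by auto
qed

lemma admissible_sector_transfer:
  assumes A0: "admissible M U0 \<Phi>0" and A: "admissible M U \<Phi>" and R: "defining_fn M Ur \<rho>"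
    and vp: "valid_params r R \<alpha>"
  obtains \<rho>0 c m where "\<rho>0 > 0" "ball (0,0) \<rho>0 \<subseteq> \<Phi> ` U" "\<And>q. q \<in> ball (0,0) \<rho>0 \<Longrightarrow> inv_into U \<Phi> q \<in> U0"
    "holo2 (ball (0,0) \<rho>0) (\<lambda>q. fst (\<Phi>0 (inv_into U \<Phi> q)))"
    "holo2 (ball (0,0) \<rho>0) (\<lambda>q. snd (\<Phi>0 (inv_into U \<Phi> q)))"
    "\<Phi>0 (inv_into U \<Phi> (0,0)) = (0,0)"
    "valid_params m m (\<alpha>/2)" "std_sect m m (\<alpha>/2) \<subseteq> ball (0,0) \<rho>0"
    "\<And>q. q \<in> std_sect m m (\<alpha>/2) \<Longrightarrow> \<Phi>0 (inv_into U \<Phi> q) \<in> std_sect r R \<alpha>"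
    "\<And>q. q \<in> Dplus m m (\<alpha>/2) \<Longrightarrow>
       \<Phi>0 (inv_into U \<Phi> q) \<in> (if Re c > 0 then Dplus r R \<alpha> else Dminus r R \<alpha>)"
    "\<And>q. q \<in> Dminus m m (\<alpha>/2) \<Longrightarrow>
       \<Phi>0 (inv_into U \<Phi> q) \<in> (if Re c > 0 then Dminus r R \<alpha> else Dplus r R \<alpha>)"
proof -
  define h1 where "h1 q = fst (\<Phi>0 (inv_into U \<Phi> q))" for q
  define h2 where "h2 q = snd (\<Phi>0 (inv_into U \<Phi> q))" for q
  obtain \<rho>0 c where t: "\<rho>0 > 0" "ball (0,0) \<rho>0 \<subseteq> \<Phi> ` U" "\<And>q. q \<in> ball (0,0) \<rho>0 \<Longrightarrow> inv_into U \<Phi> q \<in> U0"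
      "holo2 (ball (0,0) \<rho>0) h1" "holo2 (ball (0,0) \<rho>0) h2" "\<Phi>0 (inv_into U \<Phi> (0,0)) = (0,0)"
      "\<And>z. (z, 0::complex) \<in> ball (0,0) \<rho>0 \<Longrightarrow> h2 (z,0) = 0"
      "(h2 has_derivative (\<lambda>v. snd v * c)) (at (0,0))" "Im c = 0" "c \<noteq> 0"
    unfolding h1_def h2_def by (rule admissible_transition_map[OF A0 A R]) blast
  have est: "\<exists>\<delta>>0. \<forall>z w. norm z < \<delta> \<and> norm w < \<delta> \<longrightarrow> norm (h2 (z,w) - c * w) \<le> \<epsilon> * norm w"
    if "\<epsilon> > 0" for \<epsilon>
    using holo2_vanishing_on_axis_estimate[OF t(5,1,7,8) that] by metis
  have "isCont h1 (0,0)" using holo2_isCont[OF t(4)] t(1) by simp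
  moreover have "h1 (0,0) = 0" using t(6) unfolding h1_def by simp
  ultimately obtain m where "valid_params m m (\<alpha>/2)" "std_sect m m (\<alpha>/2) \<subseteq> ball (0,0) \<rho>0"
    "\<And>q. q \<in> std_sect m m (\<alpha>/2) \<Longrightarrow> (h1 q, h2 q) \<in> std_sect r R \<alpha>"
    "\<And>q. q \<in> Dplus m m (\<alpha>/2) \<Longrightarrow> (h1 q, h2 q) \<in> (if Re c > 0 then Dplus r R \<alpha> else Dminus r R \<alpha>)"
    "\<And>q. q \<in> Dminus m m (\<alpha>/2) \<Longrightarrow> (h1 q, h2 q) \<in> (if Re c > 0 then Dminus r R \<alpha> else Dplus r R \<alpha>)"
    by (rule sector_transfer[OF vp t(1) t(9,10) _ _ est]) blast+
  then show thesis using that[of \<rho>0 m c] t(1-6) unfolding h1_def h2_def by simp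
qed

lemma tangential_sectorial_contains_std_sect:
  assumes R: "defining_fn M Ur \<rho>" and D: "tangential_sectorial M D" and A: "admissible M U \<Phi>"
  shows "\<exists>r R \<alpha>. valid_params r R \<alpha> \<and> std_sect r R \<alpha> \<subseteq> \<Phi> ` U \<and> {p \<in> U. \<Phi> p \<in> std_sect r R \<alpha>} \<subseteq> D"
proof -
  obtain U0 \<Phi>0 r R \<alpha> where A0: "admissible M U0 \<Phi>0" and vp: "valid_params r R \<alpha>"
    and D_eq: "D = {p \<in> U0. \<Phi>0 p \<in> std_sect r R \<alpha>}"
    using D unfolding tangential_sectorial_def std_in_def by blast
  obtain \<rho>0 m where s: "ball (0,0) \<rho>0 \<subseteq> \<Phi> ` U" "\<And>q. q \<in> ball (0,0) \<rho>0 \<Longrightarrow> inv_into U \<Phi> q \<in> U0"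
      "valid_params m m (\<alpha>/2)" "std_sect m m (\<alpha>/2) \<subseteq> ball (0,0) \<rho>0"
      "\<And>q. q \<in> std_sect m m (\<alpha>/2) \<Longrightarrow> \<Phi>0 (inv_into U \<Phi> q) \<in> std_sect r R \<alpha>"
    by (rule admissible_sector_transfer[OF A0 A R vp]) blast
  have inj: "inj_on \<Phi> U" using A unfolding admissible_def coord_chart_def by blast
  have "p \<in> D" if p: "p \<in> U" "\<Phi> p \<in> std_sect m m (\<alpha>/2)" for p
  proof -
    have "\<Phi> p \<in> ball (0,0) \<rho>0" using s(4) p(2) by blast
    moreover have inv: "inv_into U \<Phi> (\<Phi> p) = p" by (rule inv_into_f_f[OF inj p(1)])
    ultimately have "p \<in> U0" using s(2) by metis
    then show ?thesis using s(5)[OF p(2)] inv unfolding D_eq by simp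
  qed
  then show ?thesis using s(1,3,4) by blast
qed

lemma zero_notin_Dplus_Dminus: "(0,0) \<notin> Dplus r R \<alpha>" "(0,0) \<notin> Dminus r R \<alpha>"
  unfolding Dplus_def Dminus_def Splus_def Sminus_def by auto

lemma sect_ext_change_coords:
  assumes R: "defining_fn M Ur \<rho>" and S: "std_in M U \<Phi> r R \<alpha> D" and f: "sect_ext f M U \<Phi> r R \<alpha>"
    and A': "admissible M U' \<Psi>"
  shows "\<exists>r' R' \<alpha>' D'. std_in M U' \<Psi> r' R' \<alpha>' D' \<and> sect_ext f M U' \<Psi> r' R' \<alpha>'"
proof -
  have A: "admissible M U \<Phi>" and vp: "valid_params r R \<alpha>" using S unfolding std_in_def by auto
  define h1 where "h1 q = fst (\<Phi> (inv_into U' \<Psi> q))" for q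
  define h2 where "h2 q = snd (\<Phi> (inv_into U' \<Psi> q))" for q
  obtain \<rho>0 c m where s: "\<rho>0 > 0" "ball (0,0) \<rho>0 \<subseteq> \<Psi> ` U'" "\<And>q. q \<in> ball (0,0) \<rho>0 \<Longrightarrow> inv_into U' \<Psi> q \<in> U"
      "holo2 (ball (0,0) \<rho>0) h1" "holo2 (ball (0,0) \<rho>0) h2" "h1 (0,0) = 0" "h2 (0,0) = 0"
      "valid_params m m (\<alpha>/2)" "std_sect m m (\<alpha>/2) \<subseteq> ball (0,0) \<rho>0"
      "\<And>q. q \<in> Dplus m m (\<alpha>/2) \<Longrightarrow> (h1 q, h2 q) \<in> (if Re c > 0 then Dplus r R \<alpha> else Dminus r R \<alpha>)"
      "\<And>q. q \<in> Dminus m m (\<alpha>/2) \<Longrightarrow> (h1 q, h2 q) \<in> (if Re c > 0 then Dminus r R \<alpha> else Dplus r R \<alpha>)"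
    unfolding h1_def h2_def by (rule admissible_sector_transfer[OF A A' R vp]) auto
  obtain gp gm a where g: "holo2 (Dplus r R \<alpha>) gp" "holo2 (Dminus r R \<alpha>) gm"
      "\<And>p. p \<in> U \<inter> M \<Longrightarrow> \<Phi> p \<in> Dplus r R \<alpha> \<Longrightarrow> gp (\<Phi> p) = f p"
      "\<And>p. p \<in> U \<inter> M \<Longrightarrow> \<Phi> p \<in> Dminus r R \<alpha> \<Longrightarrow> gm (\<Phi> p) = f p"
      "asymp_rep gp a (Dplus r R \<alpha>)" "asymp_rep gm a (Dminus r R \<alpha>)"
    using f unfolding sect_ext_def by blast
  have "(0,0) \<in> ball (0::complex, 0::complex) \<rho>0" using s(1) by simp
  then obtain K \<delta> where K: "K > 0" "\<delta> > 0" "\<And>q. norm q < \<delta> \<Longrightarrow> norm (h1 q, h2 q) \<le> K * norm q"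
    by (rule holo2_Pair_linear_bound[OF s(4,5) _ s(6,7)]) blast
  have "cball 0 (\<rho>0/3) \<times> cball 0 (\<rho>0/3) \<subseteq> ball (0::complex, 0::complex) \<rho>0"
  proof
    fix q :: "complex \<times> complex" assume "q \<in> cball 0 (\<rho>0/3) \<times> cball 0 (\<rho>0/3)"
    then have "norm (fst q) \<le> \<rho>0/3" "norm (snd q) \<le> \<rho>0/3" by auto
    moreover have "norm q \<le> norm (fst q) + norm (snd q)" by (metis norm_Pair_le prod.collapse)
    ultimately show "q \<in> ball (0,0) \<rho>0" unfolding mem_ball_origin using s(1) by linarith
  qed
  then obtain a' where E: "\<And>N. \<exists>C \<delta>. \<delta> > 0 \<and>
      (\<forall>q. norm q < \<delta> \<longrightarrow> norm (poly2 N a (h1 q, h2 q) - poly2 N a' q) \<le> C * norm q ^ Suc N)"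
    using poly2_compose_expansion[OF s(4,5) _ _ less_imp_le[OF K(1)] K(2,3), of "\<rho>0/3" a] s(1) by auto
  have sub: "Dplus m m (\<alpha>/2) \<subseteq> ball (0,0) \<rho>0" "Dminus m m (\<alpha>/2) \<subseteq> ball (0,0) \<rho>0"
    using s(9) Dplus_Dminus_subset_std_sect by blast+
  have chart_change: "p \<in> U" "\<Phi> p = (h1 (\<Psi> p), h2 (\<Psi> p))" if "p \<in> U'" "\<Psi> p \<in> ball (0,0) \<rho>0" for p
  proof -
    have "inv_into U' \<Psi> (\<Psi> p) = p" using A' that(1) unfolding admissible_def coord_chart_def by simp
    then show "p \<in> U" "\<Phi> p = (h1 (\<Psi> p), h2 (\<Psi> p))" using s(3)[OF that(2)] unfolding h1_def h2_def by auto
  qed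
  note pull = sectorial_pullback[OF _ _ _ s(4,5) _ _ K E]
  have pull: "holo2 S (\<lambda>q. g (h1 q, h2 q)) \<and> asymp_rep (\<lambda>q. g (h1 q, h2 q)) a' S \<and>
      (\<forall>p \<in> U' \<inter> M. \<Psi> p \<in> S \<longrightarrow> g (h1 (\<Psi> p), h2 (\<Psi> p)) = f p)"
    if S: "S \<subseteq> ball (0,0) \<rho>0" "\<And>q. q \<in> S \<Longrightarrow> (h1 q, h2 q) \<in> A"
      and g: "holo2 A g" "asymp_rep g a A" "(0,0) \<notin> A" "\<And>p. p \<in> U \<inter> M \<Longrightarrow> \<Phi> p \<in> A \<Longrightarrow> g (\<Phi> p) = f p"
    for S A g
  proof (intro conjI ballI impI)
    show "holo2 S (\<lambda>q. g (h1 q, h2 q))" "asymp_rep (\<lambda>q. g (h1 q, h2 q)) a' S"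
      using sectorial_pullback[OF g(1-3) s(4,5) S K E] by blast+
    show "g (h1 (\<Psi> p), h2 (\<Psi> p)) = f p" if p: "p \<in> U' \<inter> M" "\<Psi> p \<in> S" for p
    proof -
      have "\<Psi> p \<in> ball (0,0) \<rho>0" using S(1) p(2) by blast
      then have "p \<in> U" "\<Phi> p = (h1 (\<Psi> p), h2 (\<Psi> p))" using chart_change p(1) by auto
      then show ?thesis using g(4)[of p] S(2)[OF p(2)] p(1) by simp
    qed
  qed
  have "sect_ext f M U' \<Psi> m m (\<alpha>/2)"
  proof (cases "Re c > 0")
    case True
    then show ?thesis
      using pull[OF sub(1) _ g(1,5) zero_notin_Dplus_Dminus(1) g(3)] s(10)
        pull[OF sub(2) _ g(2,6) zero_notin_Dplus_Dminus(2) g(4)] s(11)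
      unfolding sect_ext_def by (intro exI[of _ "\<lambda>q. gp (h1 q, h2 q)"] exI[of _ "\<lambda>q. gm (h1 q, h2 q)"]) auto
  next
    case False
    then show ?thesis
      using pull[OF sub(1) _ g(2,6) zero_notin_Dplus_Dminus(2) g(4)] s(10)
        pull[OF sub(2) _ g(1,5) zero_notin_Dplus_Dminus(1) g(3)] s(11)
      unfolding sect_ext_def by (intro exI[of _ "\<lambda>q. gm (h1 q, h2 q)"] exI[of _ "\<lambda>q. gp (h1 q, h2 q)"]) auto
  qed
  moreover have "std_in M U' \<Psi> m m (\<alpha>/2) {p \<in> U'. \<Psi> p \<in> std_sect m m (\<alpha>/2)}"
    unfolding std_in_def using A' s(2,8,9) by blast
  ultimately show ?thesis by blast
qed

theorem proposition3p3:
  fixes M :: "(complex \<times> complex) set"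
  assumes "real_analytic_hypersurface M"
    and "levi_nonflat M"
    and "nonminimal_at0 M"
  shows "(\<forall>D U \<Phi>. tangential_sectorial M D \<and> admissible M U \<Phi> \<longrightarrow>
            (\<exists>r R \<alpha>. valid_params r R \<alpha> \<and> std_sect r R \<alpha> \<subseteq> \<Phi> ` U \<and>
                      {p \<in> U. \<Phi> p \<in> std_sect r R \<alpha>} \<subseteq> D))
       \<and> (\<forall>f V D U \<Phi> r R \<alpha>. CR_smooth M V f \<and> std_in M U \<Phi> r R \<alpha> D \<and> sect_ext f M U \<Phi> r R \<alpha> \<longrightarrow>
            (\<forall>U' \<Psi>. admissible M U' \<Psi> \<longrightarrow>
               (\<exists>r' R' \<alpha>' D'. std_in M U' \<Psi> r' R' \<alpha>' D' \<and> sect_ext f M U' \<Psi> r' R' \<alpha>')))"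
proof -
  obtain Ur \<rho> where R: "defining_fn M Ur \<rho>"
    using assms(1) unfolding real_analytic_hypersurface_def by blast
  show ?thesis
  proof (intro conjI allI impI)
    fix D U \<Phi> assume "tangential_sectorial M D \<and> admissible M U \<Phi>"
    then show "\<exists>r R \<alpha>. valid_params r R \<alpha> \<and> std_sect r R \<alpha> \<subseteq> \<Phi> ` U \<and> {p \<in> U. \<Phi> p \<in> std_sect r R \<alpha>} \<subseteq> D"
      using tangential_sectorial_contains_std_sect[OF R] by blast
  next
    fix f V D U \<Phi> r R \<alpha> U' \<Psi>
    assume "CR_smooth M V f \<and> std_in M U \<Phi> r R \<alpha> D \<and> sect_ext f M U \<Phi> r R \<alpha>" "admissible M U' \<Psi>"
    then show "\<exists>r' R' \<alpha>' D'. std_in M U' \<Psi> r' R' \<alpha>' D' \<and> sect_ext f M U' \<Psi> r' R' \<alpha>'"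
      using sect_ext_change_coords[OF R] by blast
  qed
qed

end
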